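(* Assume Case 2 holds, $d=0$ and $\delta<T_{s-1}$. Then: (1) if $l_1\le1$, then $c(Q^n)=\gamma_n$ for all $n\ge1$; (2) if $l_1>1$, then $l_1^{-1}\gamma\le c(q)<\gamma$, and $l_1^{-1}\gamma_n<c(Q^n)\le\gamma_n$ for all $n\ge2$. Here $\gamma_n=\gamma\delta^{n-1}$.
   Context: Let $f(z,w)=(p(z),q(z,w))$ be a holomorphic skew product germ at the origin of $\mathbb{C}^2$ with $f(0,0)=(0,0)$, where $p(z)=a_\delta z^\delta+O(z^{\delta+1})$ with $a_\delta\neq0$ and integer $\delta\ge1$, and $q(z,w)=\sum_{i+j\ge1}b_{ij}z^iw^j$ is not identically zero. For $n\ge1$ write $f^n=(p^n,Q^n)$. For a nonzero germ $g=\sum g_{ij}z^iw^j$ let $c(g)=\min\{i+j:g_{ij}\neq0\}$. The Newton polygon $N(g)$ is the convex hull of $\bigcup_{g_{ij}\neq0}\{(x,y):x\ge i,\ y\ge j\}$. Let $(n_1,m_1),\dots,(n_s,m_s)$ be the vertices of $N(q)$ with $n_1<\cdots<n_s$, $m_1>\cdots>m_s$; for $1\le k\le s-1$ let $T_k$ be the $y$-intercept of the line through $(n_k,m_k)$ and $(n_{k+1},m_{k+1})$. Case 2 means: $s>1$ and $\delta\le T_{s-1}$; set $(\gamma,d)=(n_s,m_s)$ and $l_1=\frac{n_s-n_{s-1}}{m_{s-1}-m_s}$. *)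

theory Defs
  imports "HOL-Analysis.Analysis"
begin

definition ps1_expansion :: "(complex \<Rightarrow> complex) \<Rightarrow> (nat \<Rightarrow> complex) \<Rightarrow> bool" where
  "ps1_expansion g a \<longleftrightarrow>
     (\<exists>r>0. \<forall>z. norm z < r \<longrightarrow> ((\<lambda>k. a k * z ^ k) has_sum g z) UNIV)"

definition ps2_expansion :: "(complex \<Rightarrow> complex \<Rightarrow> complex) \<Rightarrow> (nat \<Rightarrow> nat \<Rightarrow> complex) \<Rightarrow> bool" where
  "ps2_expansion g a \<longleftrightarrow>
     (\<exists>r>0. \<forall>z w. norm z < r \<longrightarrow> norm w < r \<longrightarrow>
        ((\<lambda>(i,j). a i j * z ^ i * w ^ j) has_sum g z w) UNIV)"

definition coeff2 :: "(complex \<Rightarrow> complex \<Rightarrow> complex) \<Rightarrow> nat \<Rightarrow> nat \<Rightarrow> complex" where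
  "coeff2 g = (THE a. ps2_expansion g a)"

definition germ_ord :: "(complex \<Rightarrow> complex \<Rightarrow> complex) \<Rightarrow> nat" where
  "germ_ord g = (LEAST k. \<exists>i j. i + j = k \<and> coeff2 g i j \<noteq> 0)"

definition newton_polygon :: "(nat \<Rightarrow> nat \<Rightarrow> complex) \<Rightarrow> (real \<times> real) set" where
  "newton_polygon b = convex hull
     (\<Union>{ {(x, y). x \<ge> real i \<and> y \<ge> real j} | i j. b i j \<noteq> 0 })"

text \<open>y-intercept of the line through (n_k,m_k) and (n_{k+1},m_{k+1}).\<close>
definition T_int :: "(nat \<Rightarrow> nat) \<Rightarrow> (nat \<Rightarrow> nat) \<Rightarrow> nat \<Rightarrow> real" where
  "T_int nv mv k = real (mv k) + (real (mv k) - real (mv (Suc k))) * real (nv k)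
                     / (real (nv (Suc k)) - real (nv k))"

definition skewQ :: "(complex \<Rightarrow> complex) \<Rightarrow> (complex \<Rightarrow> complex \<Rightarrow> complex) \<Rightarrow> nat
                      \<Rightarrow> complex \<Rightarrow> complex \<Rightarrow> complex" where
  "skewQ p q n z w = snd (((\<lambda>(x, y). (p x, q x y)) ^^ n) (z, w))"

end

theory Submission
  imports Defs "HOL-Complex_Analysis.Cauchy_Integral_Formula"
begin

text \<open>
  The two components of f^n are expanded as convergent double power series, computed recursively
  by substituting series into series. In a substitution b(u, v) a coefficient of total degree k can
  only come from a monomial z^i w^j of b with i c(u) + j c(v) \<le> k, and the lowest pure z-power
  coefficient is exact when a single monomial of b minimises this weight. The first component has
  order \<delta>^n, attained on the z-axis. By the Newton polygon hypotheses every monomial z^i w^j of q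
  satisfies i + l1 j \<ge> \<gamma>; together with l1 \<delta> < \<gamma> this makes z^\<gamma> the unique minimiser of
  \<delta> i + \<gamma> j, so Q^n has a nonzero z-axis coefficient of degree \<gamma>\<delta>^(n-1), the upper bound.
  The lower bounds follow by induction on n, from \<delta> i + \<gamma> j \<ge> \<gamma>\<delta> when l1 \<le> 1 and from
  l1 \<delta> i + \<gamma> j > \<gamma>\<delta> when l1 > 1.
\<close>

type_synonym ps2 = "nat \<Rightarrow> nat \<Rightarrow> complex"

section \<open>Cauchy products of double families\<close>

definition conv_fibre :: "nat \<Rightarrow> nat \<Rightarrow> ((nat \<times> nat) \<times> (nat \<times> nat)) set" where
  "conv_fibre m n = {x. fst (fst x) + fst (snd x) = m \<and> snd (fst x) + snd (snd x) = n}"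

lemma finite_conv_fibre: "finite (conv_fibre m n)"
proof -
  have "conv_fibre m n \<subseteq> ({..m} \<times> {..n}) \<times> ({..m} \<times> {..n})" by (auto simp: conv_fibre_def)
  then show ?thesis by (rule finite_subset) auto
qed

lemma has_sum_product_abs:
  fixes f g :: "nat \<times> nat \<Rightarrow> 'a::{real_normed_field,banach,second_countable_topology}"
  assumes f: "(\<lambda>x. norm (f x)) summable_on UNIV" and g: "(\<lambda>x. norm (g x)) summable_on UNIV"
  shows "((\<lambda>x. f (fst x) * g (snd x)) has_sum (infsum f UNIV * infsum g UNIV)) (UNIV \<times> UNIV)"
proof -
  let ?H = "\<lambda>x::(nat\<times>nat)\<times>(nat\<times>nat). f (fst x) * g (snd x)"
  have gs: "g summable_on UNIV" using g abs_summable_summable by blast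
  have fs: "f summable_on UNIV" using f abs_summable_summable by blast
  have Hs: "(\<lambda>x. norm (?H x)) summable_on (UNIV \<times> UNIV)"
  proof (rule Infinite_Sum.abs_summable_on_Sigma_iff[where f="?H" and A=UNIV and B="\<lambda>_. UNIV", THEN iffD2], intro conjI ballI)
    fix x show "(\<lambda>y. norm (?H (x, y))) summable_on UNIV"
      using summable_on_cmult_right[OF g, of "norm (f x)"] by (simp add: norm_mult)
  next
    have "(\<lambda>x. norm (f x) * infsum (\<lambda>y. norm (g y)) UNIV) summable_on UNIV"
      using summable_on_cmult_left[OF f] by simp
    moreover have "infsum (\<lambda>y. norm (?H (x, y))) UNIV = norm (f x) * infsum (\<lambda>y. norm (g y)) UNIV" for x
      by (simp add: norm_mult infsum_cmult_right')
    ultimately show "(\<lambda>x. norm (infsum (\<lambda>y. norm (?H (x, y))) UNIV)) summable_on UNIV"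
      by (simp add: infsum_nonneg)
  qed
  show ?thesis
  proof (rule has_sum_SigmaI)
    fix x show "((\<lambda>y. ?H (x, y)) has_sum (f x * infsum g UNIV)) UNIV"
      using has_sum_cmult_right[OF has_sum_infsum[OF gs], of "f x"] by simp
  next
    show "((\<lambda>x. f x * infsum g UNIV) has_sum (infsum f UNIV * infsum g UNIV)) UNIV"
      using has_sum_cmult_left[OF has_sum_infsum[OF fs]] by simp
  next
    show "?H summable_on UNIV \<times> UNIV" by (rule Infinite_Sum.abs_summable_summable[OF Hs])
  qed
qed

lemma has_sum_regroup_conv_fibre:
  fixes H :: "(nat \<times> nat) \<times> (nat \<times> nat) \<Rightarrow> 'a::banach"
  assumes "(H has_sum S) (UNIV \<times> UNIV)"
  shows "((\<lambda>y. \<Sum>x\<in>conv_fibre (fst y) (snd y). H x) has_sum S) UNIV"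
proof -
  let ?phi = "\<lambda>x::(nat \<times> nat) \<times> (nat \<times> nat). ((fst (fst x) + fst (snd x), snd (fst x) + snd (snd x)), x)"
  have bij: "bij_betw ?phi UNIV (Sigma UNIV (\<lambda>y. conv_fibre (fst y) (snd y)))"
    by (rule bij_betwI[of _ _ _ snd]) (auto simp: conv_fibre_def)
  have "((\<lambda>x. (\<lambda>(y, x). H x) (?phi x)) has_sum S) UNIV" using assms by simp
  then have "((\<lambda>(y, x). H x) has_sum S) (Sigma UNIV (\<lambda>y. conv_fibre (fst y) (snd y)))"
    using has_sum_reindex_bij_betw[OF bij] by blast
  moreover have "((\<lambda>x. (\<lambda>(y, x). H x) (y, x)) has_sum (\<Sum>x\<in>conv_fibre (fst y) (snd y). H x)) (conv_fibre (fst y) (snd y))" for y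
    using has_sum_finite[OF finite_conv_fibre] by simp
  ultimately show ?thesis
    by (rule has_sum_SigmaD[where g="\<lambda>y. \<Sum>x\<in>conv_fibre (fst y) (snd y). H x"])
qed

section \<open>Absolutely convergent double power series\<close>

definition ps_abs_conv :: "ps2 \<Rightarrow> real \<Rightarrow> bool" where
  "ps_abs_conv c r \<longleftrightarrow> (\<lambda>x. norm (c (fst x) (snd x)) * r ^ (fst x + snd x)) summable_on UNIV"

definition ps_norm :: "ps2 \<Rightarrow> real \<Rightarrow> real" where
  "ps_norm c r = (\<Sum>\<^sub>\<infinity>x\<in>UNIV. norm (c (fst x) (snd x)) * r ^ (fst x + snd x))"

definition ps_term :: "ps2 \<Rightarrow> complex \<Rightarrow> complex \<Rightarrow> nat \<times> nat \<Rightarrow> complex" where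
  "ps_term c z w x = c (fst x) (snd x) * z ^ fst x * w ^ snd x"

definition ps_eval :: "ps2 \<Rightarrow> complex \<Rightarrow> complex \<Rightarrow> complex" where
  "ps_eval c z w = (\<Sum>\<^sub>\<infinity>x\<in>UNIV. ps_term c z w x)"

lemma ps_term_eq: "ps_term c z w = (\<lambda>x. c (fst x) (snd x) * z ^ fst x * w ^ snd x)"
  by (simp add: fun_eq_iff ps_term_def)

lemma norm_ps_term_le:
  assumes "norm z \<le> r" "norm w \<le> r"
  shows "norm (ps_term c z w x) \<le> norm (c (fst x) (snd x)) * r ^ (fst x + snd x)"
proof -
  have r0: "0 \<le> r" using assms(1) norm_ge_zero order_trans by blast
  have "norm z ^ fst x * norm w ^ snd x \<le> r ^ fst x * r ^ snd x"
    using assms r0 by (intro mult_mono power_mono) auto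
  then show ?thesis
    by (simp add: ps_term_def norm_mult norm_power power_add mult.assoc mult_left_mono)
qed

lemma abs_summable_ps_term:
  assumes "ps_abs_conv c r" "norm z \<le> r" "norm w \<le> r"
  shows "(\<lambda>x. norm (ps_term c z w x)) summable_on UNIV"
  using assms(1) unfolding ps_abs_conv_def
  by (rule summable_on_comparison_test) (use norm_ps_term_le[OF assms(2,3)] in auto)

lemma ps_eval_has_sum:
  assumes "ps_abs_conv c r" "norm z \<le> r" "norm w \<le> r"
  shows "(ps_term c z w has_sum ps_eval c z w) UNIV"
  unfolding ps_eval_def
  by (rule has_sum_infsum, rule Infinite_Sum.abs_summable_summable[OF abs_summable_ps_term[OF assms]])

lemma norm_ps_eval_le:
  assumes "ps_abs_conv c r" "norm z \<le> r" "norm w \<le> r"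
  shows "norm (ps_eval c z w) \<le> ps_norm c r"
  unfolding ps_norm_def
  by (rule norm_infsum_le[OF ps_eval_has_sum[OF assms] has_sum_infsum])
     (use assms(1) norm_ps_term_le[OF assms(2,3)] in \<open>auto simp: ps_abs_conv_def\<close>)

lemma ps_norm_nonneg: "0 \<le> r \<Longrightarrow> 0 \<le> ps_norm c r"
  unfolding ps_norm_def by (rule infsum_nonneg) auto

lemma ps_abs_conv_mono:
  assumes "ps_abs_conv c r" "0 \<le> r'" "r' \<le> r"
  shows "ps_abs_conv c r'"
  using assms(1) unfolding ps_abs_conv_def
  by (rule summable_on_comparison_test) (use assms in \<open>auto intro!: mult_left_mono power_mono\<close>)

lemma ps_norm_shrink:
  assumes c0: "c 0 0 = 0" and c: "ps_abs_conv c r" and r': "0 < r'" "r' \<le> r"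
  shows "ps_norm c r' \<le> (r' / r) * ps_norm c r"
proof -
  have r: "0 < r" using r' by simp
  define f where "f = (\<lambda>x::nat \<times> nat. norm (c (fst x) (snd x)) * r ^ (fst x + snd x))"
  define f' where "f' = (\<lambda>x::nat \<times> nat. norm (c (fst x) (snd x)) * r' ^ (fst x + snd x))"
  have le: "f' x \<le> (r' / r) * f x" for x
  proof (cases "fst x + snd x = 0")
    case True then have "fst x = 0" "snd x = 0" by auto
    then show ?thesis using c0 by (simp add: f_def f'_def)
  next
    case False
    then obtain k where k: "fst x + snd x = Suc k" using not0_implies_Suc by blast
    have q: "0 \<le> r' / r" "r' / r \<le> 1" using r r' by auto
    have "r' ^ Suc k = (r' / r) * ((r' / r) ^ k * r ^ Suc k)" using r by (simp add: field_simps power_divide)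
    also have "\<dots> \<le> (r' / r) * (1 * r ^ Suc k)"
      using q r by (intro mult_left_mono mult_right_mono power_le_one) auto
    finally have "r' ^ Suc k \<le> (r' / r) * r ^ Suc k" by simp
    then show ?thesis unfolding f_def f'_def k
      by (metis (no_types, lifting) mult.left_commute mult_left_mono norm_ge_zero)
  qed
  have fs: "f summable_on UNIV" using c by (simp add: ps_abs_conv_def f_def)
  have fs2: "(\<lambda>x. (r' / r) * f x) summable_on UNIV" by (rule summable_on_cmult_right[OF fs])
  have f's: "f' summable_on UNIV"
    by (rule summable_on_comparison_test[OF fs2]) (use le r' in \<open>auto simp: f'_def\<close>)
  have "infsum f' UNIV \<le> infsum (\<lambda>x. (r' / r) * f x) UNIV"
    by (rule infsum_mono[OF f's fs2 le])
  also have "\<dots> = (r' / r) * infsum f UNIV" by (rule infsum_cmult_right[OF fs])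
  finally show ?thesis unfolding ps_norm_def f_def f'_def by simp
qed

definition ps_mul :: "ps2 \<Rightarrow> ps2 \<Rightarrow> ps2" where
  "ps_mul c d m n = (\<Sum>x\<in>conv_fibre m n. c (fst (fst x)) (snd (fst x)) * d (fst (snd x)) (snd (snd x)))"

lemma ps_abs_conv_mul:
  assumes c: "ps_abs_conv c r" and d: "ps_abs_conv d r" and r: "0 \<le> r"
  shows "ps_abs_conv (ps_mul c d) r \<and> ps_norm (ps_mul c d) r \<le> ps_norm c r * ps_norm d r"
proof -
  define f where "f = (\<lambda>x::nat\<times>nat. norm (c (fst x) (snd x)) * r ^ (fst x + snd x))"
  define g where "g = (\<lambda>x::nat\<times>nat. norm (d (fst x) (snd x)) * r ^ (fst x + snd x))"
  have fs: "(\<lambda>x. norm (f x)) summable_on UNIV" using c r by (simp add: ps_abs_conv_def f_def)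
  have gs: "(\<lambda>x. norm (g x)) summable_on UNIV" using d r by (simp add: ps_abs_conv_def g_def)
  have hs: "((\<lambda>y. \<Sum>x\<in>conv_fibre (fst y) (snd y). f (fst x) * g (snd x)) has_sum (ps_norm c r * ps_norm d r)) UNIV"
    using has_sum_regroup_conv_fibre[OF has_sum_product_abs(1)[OF fs gs]] by (simp add: ps_norm_def f_def g_def)
  have le: "norm (ps_mul c d (fst y) (snd y)) * r ^ (fst y + snd y)
            \<le> (\<Sum>x\<in>conv_fibre (fst y) (snd y). f (fst x) * g (snd x))" for y
  proof -
    have "norm (ps_mul c d (fst y) (snd y)) * r ^ (fst y + snd y)
       \<le> (\<Sum>x\<in>conv_fibre (fst y) (snd y). norm (c (fst (fst x)) (snd (fst x)) * d (fst (snd x)) (snd (snd x)))) * r ^ (fst y + snd y)"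
      unfolding ps_mul_def using r by (intro mult_right_mono norm_sum) auto
    also have "\<dots> = (\<Sum>x\<in>conv_fibre (fst y) (snd y). f (fst x) * g (snd x))"
      unfolding sum_distrib_right
    proof (rule sum.cong)
      fix x assume "x \<in> conv_fibre (fst y) (snd y)"
      then have "fst y + snd y = (fst (fst x) + snd (fst x)) + (fst (snd x) + snd (snd x))"
        by (auto simp: conv_fibre_def)
      then show "norm (c (fst (fst x)) (snd (fst x)) * d (fst (snd x)) (snd (snd x))) * r ^ (fst y + snd y) = f (fst x) * g (snd x)"
        by (simp add: f_def g_def norm_mult power_add)
    qed simp
    finally show ?thesis .
  qed
  have good: "ps_abs_conv (ps_mul c d) r"
    unfolding ps_abs_conv_def
    by (rule summable_on_comparison_test[OF has_sum_imp_summable[OF hs]]) (use le r in auto)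
  moreover have "ps_norm (ps_mul c d) r \<le> ps_norm c r * ps_norm d r"
  proof -
    have "((\<lambda>y. norm (ps_mul c d (fst y) (snd y)) * r ^ (fst y + snd y)) has_sum ps_norm (ps_mul c d) r) UNIV"
      using good unfolding ps_abs_conv_def ps_norm_def by (rule has_sum_infsum)
    then show ?thesis by (rule has_sum_mono[OF _ hs]) (use le in auto)
  qed
  ultimately show ?thesis by blast
qed

lemma ps_eval_mul:
  assumes c: "ps_abs_conv c r" and d: "ps_abs_conv d r" and z: "norm z \<le> r" and w: "norm w \<le> r"
  shows "ps_eval (ps_mul c d) z w = ps_eval c z w * ps_eval d z w"
proof -
  have hs: "((\<lambda>y. \<Sum>x\<in>conv_fibre (fst y) (snd y). ps_term c z w (fst x) * ps_term d z w (snd x)) has_sum (ps_eval c z w * ps_eval d z w)) UNIV"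
    using has_sum_regroup_conv_fibre[OF has_sum_product_abs(1)[OF abs_summable_ps_term[OF c z w] abs_summable_ps_term[OF d z w]]]
    by (simp add: ps_eval_def)
  have eq: "(\<Sum>x\<in>conv_fibre (fst y) (snd y). ps_term c z w (fst x) * ps_term d z w (snd x)) = ps_term (ps_mul c d) z w y" for y
    unfolding ps_term_def ps_mul_def sum_distrib_right
  proof (rule sum.cong)
    fix x assume "x \<in> conv_fibre (fst y) (snd y)"
    then have "fst y = fst (fst x) + fst (snd x)" "snd y = snd (fst x) + snd (snd x)"
      by (auto simp: conv_fibre_def)
    then show "c (fst (fst x)) (snd (fst x)) * z ^ fst (fst x) * w ^ snd (fst x) *
          (d (fst (snd x)) (snd (snd x)) * z ^ fst (snd x) * w ^ snd (snd x)) =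
          c (fst (fst x)) (snd (fst x)) * d (fst (snd x)) (snd (snd x)) * z ^ fst y * w ^ snd y"
      by (simp add: power_add)
  qed simp
  show ?thesis using hs unfolding eq ps_eval_def by (rule infsumI)
qed

definition ps_monom :: "nat \<Rightarrow> nat \<Rightarrow> ps2" where
  "ps_monom i j m n = (if m = i \<and> n = j then 1 else 0)"

lemma has_sum_ps_monom_norm:
  "((\<lambda>x. norm (ps_monom i j (fst x) (snd x)) * r ^ (fst x + snd x)) has_sum r ^ (i + j)) UNIV"
  by (rule has_sum_finite_neutralI[where B="{(i, j)}"]) (auto simp: ps_monom_def)

lemma ps_abs_conv_monom: "ps_abs_conv (ps_monom i j) r"
  unfolding ps_abs_conv_def by (rule has_sum_imp_summable[OF has_sum_ps_monom_norm])

lemma ps_norm_monom: "ps_norm (ps_monom i j) r = r ^ (i + j)"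
  unfolding ps_norm_def by (rule infsumI[OF has_sum_ps_monom_norm])

lemma ps_eval_monom: "ps_eval (ps_monom i j) z w = z ^ i * w ^ j"
proof -
  have "(ps_term (ps_monom i j) z w has_sum z ^ i * w ^ j) UNIV"
    by (rule has_sum_finite_neutralI[where B="{(i, j)}"]) (auto simp: ps_monom_def ps_term_def)
  then show ?thesis unfolding ps_eval_def by (rule infsumI)
qed

primrec ps_power :: "ps2 \<Rightarrow> nat \<Rightarrow> ps2" where
  "ps_power u 0 = ps_monom 0 0"
| "ps_power u (Suc k) = ps_mul u (ps_power u k)"

lemma ps_abs_conv_power:
  assumes u: "ps_abs_conv u r" and r: "0 \<le> r"
  shows "ps_abs_conv (ps_power u k) r \<and> ps_norm (ps_power u k) r \<le> ps_norm u r ^ k"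
proof (induction k)
  case 0 then show ?case by (simp add: ps_abs_conv_monom ps_norm_monom)
next
  case (Suc k)
  have m: "ps_abs_conv (ps_power u (Suc k)) r \<and> ps_norm (ps_power u (Suc k)) r \<le> ps_norm u r * ps_norm (ps_power u k) r"
    using ps_abs_conv_mul[OF u _ r, of "ps_power u k"] Suc by simp
  moreover have "ps_norm u r * ps_norm (ps_power u k) r \<le> ps_norm u r * ps_norm u r ^ k"
    using Suc ps_norm_nonneg[OF r] by (intro mult_left_mono) auto
  ultimately show ?case by simp
qed

lemma ps_eval_power:
  assumes u: "ps_abs_conv u r" and z: "norm z \<le> r" and w: "norm w \<le> r"
  shows "ps_eval (ps_power u k) z w = ps_eval u z w ^ k"
proof -
  have r: "0 \<le> r" using z norm_ge_zero order_trans by blast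
  show ?thesis
  proof (induction k)
    case 0 then show ?case by (simp add: ps_eval_monom)
  next
    case (Suc k) then show ?case
      using ps_eval_mul[OF u conjunct1[OF ps_abs_conv_power[OF u r, of k]] z w] by simp
  qed
qed

definition ps_order_ge :: "ps2 \<Rightarrow> nat \<Rightarrow> bool" where
  "ps_order_ge c k \<longleftrightarrow> (\<forall>i j. i + j < k \<longrightarrow> c i j = 0)"

lemma ps_order_ge_mul:
  assumes "ps_order_ge c a" "ps_order_ge d b"
  shows "ps_order_ge (ps_mul c d) (a + b)"
  unfolding ps_order_ge_def ps_mul_def
proof (intro allI impI sum.neutral ballI)
  fix i j x assume ij: "i + j < a + b" and x: "x \<in> conv_fibre i j"
  then have "fst (fst x) + snd (fst x) < a \<or> fst (snd x) + snd (snd x) < b"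
    by (auto simp: conv_fibre_def)
  then show "c (fst (fst x)) (snd (fst x)) * d (fst (snd x)) (snd (snd x)) = 0"
    using assms by (auto simp: ps_order_ge_def)
qed

lemma ps_order_ge_power:
  assumes "ps_order_ge u a"
  shows "ps_order_ge (ps_power u k) (k * a)"
proof (induction k)
  case 0 then show ?case by (simp add: ps_order_ge_def)
next
  case (Suc k) then show ?case using ps_order_ge_mul[OF assms Suc] by (simp add: add.commute)
qed

definition ps_axis_order_ge :: "ps2 \<Rightarrow> nat \<Rightarrow> bool" where
  "ps_axis_order_ge c k \<longleftrightarrow> (\<forall>i<k. c i 0 = 0)"

lemma ps_axis_order_ge_mul:
  assumes c: "ps_axis_order_ge c a" and d: "ps_axis_order_ge d b"
  shows "ps_axis_order_ge (ps_mul c d) (a + b) \<and> ps_mul c d (a + b) 0 = c a 0 * d b 0"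
proof -
  let ?t = "\<lambda>x. c (fst (fst x)) (snd (fst x)) * d (fst (snd x)) (snd (snd x))"
  have z: "?t x = 0" if "x \<in> conv_fibre m 0" "x \<noteq> ((a,0),(b,0))" "m \<le> a + b" for x m
  proof -
    from that(1) have s: "snd (fst x) = 0" "snd (snd x) = 0" "fst (fst x) + fst (snd x) = m"
      by (auto simp: conv_fibre_def)
    have "fst (fst x) < a \<or> fst (snd x) < b"
    proof (rule ccontr)
      assume "\<not> ?thesis"
      then have "fst (fst x) = a" "fst (snd x) = b" using s that(3) by auto
      then have "x = ((a,0),(b,0))" using s by (metis prod.collapse)
      then show False using that(2) by simp
    qed
    then show ?thesis using c d s by (auto simp: ps_axis_order_ge_def)
  qed
  have "ps_mul c d m 0 = 0" if "m < a + b" for m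
    unfolding ps_mul_def
  proof (rule sum.neutral, rule ballI)
    fix x assume x: "x \<in> conv_fibre m 0"
    have "x \<noteq> ((a,0),(b,0))" using x that by (auto simp: conv_fibre_def)
    then show "?t x = 0" using z[OF x] that by simp
  qed
  moreover have "ps_mul c d (a + b) 0 = (\<Sum>x\<in>{((a,0),(b,0))}. ?t x)"
    unfolding ps_mul_def
    by (rule sum.mono_neutral_right[OF finite_conv_fibre]) (use z in \<open>auto simp: conv_fibre_def\<close>)
  ultimately show ?thesis by (simp add: ps_axis_order_ge_def)
qed

lemma ps_axis_order_ge_power:
  assumes "ps_axis_order_ge u a"
  shows "ps_axis_order_ge (ps_power u k) (k * a) \<and> ps_power u k (k * a) 0 = u a 0 ^ k"
proof (induction k)
  case 0 then show ?case by (simp add: ps_axis_order_ge_def ps_monom_def)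
next
  case (Suc k)
  then show ?case using ps_axis_order_ge_mul[OF assms conjunct1[OF Suc]] by (simp add: add.commute)
qed

section \<open>Substitution of series into series\<close>

definition ps_subst_monomial :: "ps2 \<Rightarrow> ps2 \<Rightarrow> nat \<times> nat \<Rightarrow> ps2" where
  "ps_subst_monomial u v x = ps_mul (ps_power u (fst x)) (ps_power v (snd x))"

definition deg_le_set :: "nat \<Rightarrow> (nat \<times> nat) set" where
  "deg_le_set K = {x. fst x + snd x \<le> K}"

lemma finite_deg_le_set: "finite (deg_le_set K)"
proof -
  have "deg_le_set K \<subseteq> {..K} \<times> {..K}" by (auto simp: deg_le_set_def)
  then show ?thesis by (rule finite_subset) auto
qed

text \<open>
  The substitution b(u, v). The sum over monomials of degree at most m + n is exhaustive once
  u and v have no constant term.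
\<close>
definition ps_comp :: "ps2 \<Rightarrow> ps2 \<Rightarrow> ps2 \<Rightarrow> ps2" where
  "ps_comp b u v m n = (\<Sum>x\<in>deg_le_set (m + n). b (fst x) (snd x) * ps_subst_monomial u v x m n)"

lemma ps_abs_conv_subst_monomial:
  assumes u: "ps_abs_conv u r" and v: "ps_abs_conv v r" and r: "0 \<le> r"
  shows "ps_abs_conv (ps_subst_monomial u v x) r"
    and "ps_norm (ps_subst_monomial u v x) r \<le> ps_norm u r ^ fst x * ps_norm v r ^ snd x"
proof -
  note pu = ps_abs_conv_power[OF u r, of "fst x"] and pv = ps_abs_conv_power[OF v r, of "snd x"]
  show "ps_abs_conv (ps_subst_monomial u v x) r"
    unfolding ps_subst_monomial_def using ps_abs_conv_mul pu pv r by blast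
  have "ps_norm (ps_subst_monomial u v x) r \<le> ps_norm (ps_power u (fst x)) r * ps_norm (ps_power v (snd x)) r"
    unfolding ps_subst_monomial_def using ps_abs_conv_mul pu pv r by blast
  also have "\<dots> \<le> ps_norm u r ^ fst x * ps_norm v r ^ snd x"
    using pu pv ps_norm_nonneg[OF r] by (intro mult_mono) auto
  finally show "ps_norm (ps_subst_monomial u v x) r \<le> ps_norm u r ^ fst x * ps_norm v r ^ snd x" .
qed

lemma ps_eval_subst_monomial:
  assumes u: "ps_abs_conv u r" and v: "ps_abs_conv v r" and z: "norm z \<le> r" and w: "norm w \<le> r"
  shows "ps_eval (ps_subst_monomial u v x) z w = ps_eval u z w ^ fst x * ps_eval v z w ^ snd x"
proof -
  have r: "0 \<le> r" using z norm_ge_zero order_trans by blast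
  show ?thesis unfolding ps_subst_monomial_def
    using ps_eval_mul[OF conjunct1[OF ps_abs_conv_power[OF u r]] conjunct1[OF ps_abs_conv_power[OF v r]] z w]
      ps_eval_power[OF u z w] ps_eval_power[OF v z w] by simp
qed

lemma ps_order_ge_subst_monomial:
  assumes "ps_order_ge u a" "ps_order_ge v c"
  shows "ps_order_ge (ps_subst_monomial u v x) (fst x * a + snd x * c)"
  unfolding ps_subst_monomial_def by (rule ps_order_ge_mul[OF ps_order_ge_power[OF assms(1)] ps_order_ge_power[OF assms(2)]])

lemma ps_subst_monomial_high_degree:
  assumes "ps_order_ge u 1" "ps_order_ge v 1" "m + n < fst x + snd x"
  shows "ps_subst_monomial u v x m n = 0"
  using ps_order_ge_subst_monomial[OF assms(1,2), of x] assms(3) by (auto simp: ps_order_ge_def)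

lemma ps_comp_majorant_summable:
  assumes b: "ps_abs_conv b R" and u: "ps_abs_conv u r" and v: "ps_abs_conv v r" and r: "0 \<le> r"
    and Nu: "ps_norm u r \<le> R" and Nv: "ps_norm v r \<le> R"
  shows "(\<lambda>(x, y). norm (b (fst x) (snd x)) *
            (norm (ps_subst_monomial u v x (fst y) (snd y)) * r ^ (fst y + snd y))) summable_on UNIV \<times> UNIV"
    (is "?G summable_on _")
proof (rule summable_on_SigmaI)
  have R: "0 \<le> R" using Nu ps_norm_nonneg[OF r, of u] by linarith
  fix x :: "nat \<times> nat"
  have "((\<lambda>y. norm (ps_subst_monomial u v x (fst y) (snd y)) * r ^ (fst y + snd y))
          has_sum ps_norm (ps_subst_monomial u v x) r) UNIV"
    using ps_abs_conv_subst_monomial(1)[OF u v r, of x] unfolding ps_abs_conv_def ps_norm_def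
    by (rule has_sum_infsum)
  from has_sum_cmult_right[OF this, of "norm (b (fst x) (snd x))"]
  show "((\<lambda>y. ?G (x, y)) has_sum (norm (b (fst x) (snd x)) * ps_norm (ps_subst_monomial u v x) r)) UNIV"
    by simp
  show "(\<lambda>x. norm (b (fst x) (snd x)) * ps_norm (ps_subst_monomial u v x) r) summable_on UNIV"
  proof (rule summable_on_comparison_test)
    show "(\<lambda>x. norm (b (fst x) (snd x)) * R ^ (fst x + snd x)) summable_on UNIV"
      using b by (simp add: ps_abs_conv_def)
  next
    fix x :: "nat \<times> nat"
    have "ps_norm (ps_subst_monomial u v x) r \<le> ps_norm u r ^ fst x * ps_norm v r ^ snd x"
      by (rule ps_abs_conv_subst_monomial(2)[OF u v r])
    also have "\<dots> \<le> R ^ fst x * R ^ snd x"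
      using Nu Nv ps_norm_nonneg[OF r] R by (intro mult_mono power_mono) auto
    finally show "norm (b (fst x) (snd x)) * ps_norm (ps_subst_monomial u v x) r
        \<le> norm (b (fst x) (snd x)) * R ^ (fst x + snd x)"
      by (simp add: power_add mult_left_mono)
    show "0 \<le> norm (b (fst x) (snd x)) * ps_norm (ps_subst_monomial u v x) r"
      using ps_norm_nonneg[OF r] by simp
  qed
qed (use r in auto)

lemma ps_abs_conv_comp:
  assumes b: "ps_abs_conv b R" and u: "ps_abs_conv u r" and v: "ps_abs_conv v r" and r: "0 \<le> r"
    and u0: "ps_order_ge u 1" and v0: "ps_order_ge v 1" and Nu: "ps_norm u r \<le> R" and Nv: "ps_norm v r \<le> R"
  shows "ps_abs_conv (ps_comp b u v) r"
proof -
  define G where "G = (\<lambda>(x, y). norm (b (fst x) (snd x)) *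
            (norm (ps_subst_monomial u v x (fst y) (snd y)) * r ^ (fst y + snd y)))"
  obtain S where "(G has_sum S) (UNIV \<times> UNIV)"
    using ps_comp_majorant_summable[OF b u v r Nu Nv] unfolding G_def summable_on_def by blast
  then have "((\<lambda>(y, x). G (x, y)) has_sum S) (UNIV \<times> UNIV)"
    using has_sum_swap[where f=G and A=UNIV and B=UNIV] by (simp add: case_prod_unfold)
  moreover have "((\<lambda>x. G (x, y)) has_sum (\<Sum>x\<in>deg_le_set (fst y + snd y). G (x, y))) UNIV" for y
    by (rule has_sum_finite_neutralI[OF finite_deg_le_set])
       (auto simp: deg_le_set_def G_def ps_subst_monomial_high_degree[OF u0 v0])
  ultimately have "((\<lambda>y. \<Sum>x\<in>deg_le_set (fst y + snd y). G (x, y)) has_sum S) UNIV"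
    using has_sum_SigmaD[where f="\<lambda>(y, x). G (x, y)" and A=UNIV and B="\<lambda>_. UNIV"] by simp
  then have sumG: "(\<lambda>y. \<Sum>x\<in>deg_le_set (fst y + snd y). G (x, y)) summable_on UNIV"
    by (rule has_sum_imp_summable)
  show ?thesis
    unfolding ps_abs_conv_def
  proof (rule summable_on_comparison_test[OF sumG])
    fix y :: "nat \<times> nat"
    have "norm (ps_comp b u v (fst y) (snd y)) * r ^ (fst y + snd y)
       \<le> (\<Sum>x\<in>deg_le_set (fst y + snd y). norm (b (fst x) (snd x) * ps_subst_monomial u v x (fst y) (snd y))) * r ^ (fst y + snd y)"
      unfolding ps_comp_def using r by (intro mult_right_mono norm_sum) auto
    also have "\<dots> = (\<Sum>x\<in>deg_le_set (fst y + snd y). G (x, y))"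
      by (simp add: sum_distrib_right G_def norm_mult mult.assoc)
    finally show "norm (ps_comp b u v (fst y) (snd y)) * r ^ (fst y + snd y) \<le> (\<Sum>x\<in>deg_le_set (fst y + snd y). G (x, y))" .
  qed (use r in auto)
qed

lemma ps_eval_comp:
  assumes b: "ps_abs_conv b R" and u: "ps_abs_conv u r" and v: "ps_abs_conv v r"
    and u0: "ps_order_ge u 1" and v0: "ps_order_ge v 1" and Nu: "ps_norm u r \<le> R" and Nv: "ps_norm v r \<le> R"
    and z: "norm z \<le> r" and w: "norm w \<le> r"
  shows "ps_eval (ps_comp b u v) z w = ps_eval b (ps_eval u z w) (ps_eval v z w)"
proof -
  have r: "0 \<le> r" using z norm_ge_zero order_trans by blast
  define U where "U = ps_eval u z w"
  define V where "V = ps_eval v z w"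
  have U: "norm U \<le> R" using norm_ps_eval_le[OF u z w] Nu by (simp add: U_def)
  have V: "norm V \<le> R" using norm_ps_eval_le[OF v z w] Nv by (simp add: V_def)
  define G where "G = (\<lambda>x::(nat\<times>nat)\<times>(nat\<times>nat). b (fst (fst x)) (snd (fst x)) * ps_term (ps_subst_monomial u v (fst x)) z w (snd x))"
  have Gs: "G summable_on UNIV \<times> UNIV"
  proof (rule Infinite_Sum.abs_summable_summable)
    show "(\<lambda>x. norm (G x)) summable_on UNIV \<times> UNIV"
    proof (rule summable_on_comparison_test[OF ps_comp_majorant_summable[OF b u v r Nu Nv]])
      fix x :: "(nat \<times> nat) \<times> (nat \<times> nat)"
      show "norm (G x) \<le> (case x of (x, y) \<Rightarrow> norm (b (fst x) (snd x)) *
            (norm (ps_subst_monomial u v x (fst y) (snd y)) * r ^ (fst y + snd y)))"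
        unfolding G_def case_prod_beta norm_mult by (intro mult_left_mono norm_ps_term_le[OF z w]) auto
    qed simp
  qed
  have G_in: "((\<lambda>y. G (x, y)) has_sum (ps_term b U V x)) UNIV" for x
  proof -
    have "((\<lambda>y. G (x, y)) has_sum (b (fst x) (snd x) * ps_eval (ps_subst_monomial u v x) z w)) UNIV"
      unfolding G_def
      using has_sum_cmult_right[OF ps_eval_has_sum[OF ps_abs_conv_subst_monomial(1)[OF u v r] z w]]
      by simp
    then show ?thesis using ps_eval_subst_monomial[OF u v z w, of x] by (simp add: ps_term_def U_def V_def mult.assoc)
  qed
  have "((\<lambda>(x, y). G (y, x)) has_sum ps_eval b U V) (UNIV \<times> UNIV)"
    using has_sum_SigmaI[OF G_in ps_eval_has_sum[OF b U V] Gs] has_sum_swap by blast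
  moreover have "((\<lambda>x. G (x, y)) has_sum (ps_term (ps_comp b u v) z w y)) UNIV" for y
  proof (rule has_sum_finite_neutralI[OF finite_deg_le_set])
    show "\<And>x. x \<in> UNIV - deg_le_set (fst y + snd y) \<Longrightarrow> G (x, y) = 0"
      by (auto simp: deg_le_set_def G_def ps_term_def ps_subst_monomial_high_degree[OF u0 v0])
    show "ps_term (ps_comp b u v) z w y = (\<Sum>x\<in>deg_le_set (fst y + snd y). G (x, y))"
      by (simp add: ps_term_def G_def ps_comp_def sum_distrib_right mult.assoc)
  qed simp
  ultimately have "(ps_term (ps_comp b u v) z w has_sum ps_eval b U V) UNIV"
    using has_sum_SigmaD[where f="\<lambda>(x, y). G (y, x)" and A=UNIV and B="\<lambda>_. UNIV"] by simp
  then show ?thesis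
    unfolding U_def V_def ps_eval_def[of "ps_comp b u v"] by (rule infsumI)
qed

lemma ps_comp_const_coeff: "c 0 0 = 0 \<Longrightarrow> ps_comp c u v 0 0 = 0"
  unfolding ps_comp_def by (rule sum.neutral) (auto simp: deg_le_set_def)

lemma ps_mul_monom: "ps_mul (ps_monom i j) (ps_monom k l) = ps_monom (i + k) (j + l)"
proof -
  have "ps_mul (ps_monom i j) (ps_monom k l) m n = (\<Sum>x\<in>conv_fibre m n. if x = ((i, j), (k, l)) then 1 else 0)" for m n
    unfolding ps_mul_def ps_monom_def by (rule sum.cong) (auto simp: prod_eq_iff)
  then show ?thesis
    by (simp add: fun_eq_iff sum.delta[OF finite_conv_fibre]) (auto simp: conv_fibre_def ps_monom_def)
qed

lemma ps_power_monom: "ps_power (ps_monom i j) k = ps_monom (k * i) (k * j)"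
  by (induction k) (simp_all add: ps_mul_monom)

lemma ps_comp_monom_X_Y: "ps_comp b (ps_monom 1 0) (ps_monom 0 1) = b"
proof -
  have "ps_comp b (ps_monom 1 0) (ps_monom 0 1) m n
      = (\<Sum>x\<in>deg_le_set (m + n). if x = (m, n) then b (fst x) (snd x) else 0)" for m n
    unfolding ps_comp_def ps_subst_monomial_def ps_power_monom ps_mul_monom
    by (rule sum.cong) (auto simp: ps_monom_def)
  then show ?thesis
    by (simp add: fun_eq_iff sum.delta[OF finite_deg_le_set]) (simp add: deg_le_set_def)
qed

lemma ps_comp_nonzero_imp_support:
  assumes "ps_comp b u v m n \<noteq> 0" "ps_order_ge u a" "ps_order_ge v c"
  shows "\<exists>x. b (fst x) (snd x) \<noteq> 0 \<and> fst x * a + snd x * c \<le> m + n"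
proof (rule ccontr)
  assume H: "\<not> ?thesis"
  have "ps_comp b u v m n = 0" unfolding ps_comp_def
  proof (rule sum.neutral, rule ballI)
    fix x assume "x \<in> deg_le_set (m + n)"
    show "b (fst x) (snd x) * ps_subst_monomial u v x m n = 0"
    proof (cases "b (fst x) (snd x) = 0")
      case False
      then have "m + n < fst x * a + snd x * c" using H by force
      then show ?thesis using ps_order_ge_subst_monomial[OF assms(2,3), of x] by (simp add: ps_order_ge_def)
    qed simp
  qed
  then show False using assms(1) by simp
qed

lemma ps_axis_order_ge_subst_monomial:
  assumes "ps_axis_order_ge u a" "ps_axis_order_ge v c"
  shows "ps_axis_order_ge (ps_subst_monomial u v x) (fst x * a + snd x * c) \<and> ps_subst_monomial u v x (fst x * a + snd x * c) 0 = u a 0 ^ fst x * v c 0 ^ snd x"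
  unfolding ps_subst_monomial_def
  using ps_axis_order_ge_mul[OF conjunct1[OF ps_axis_order_ge_power[OF assms(1)]] conjunct1[OF ps_axis_order_ge_power[OF assms(2)]]]
    ps_axis_order_ge_power[OF assms(1)] ps_axis_order_ge_power[OF assms(2)] by simp

lemma ps_axis_order_ge_comp:
  assumes u: "ps_axis_order_ge u a" and v: "ps_axis_order_ge v c" and a: "1 \<le> a" and c: "1 \<le> c"
    and M: "M = i0 * a + j0 * c"
    and others: "\<And>x. b (fst x) (snd x) \<noteq> 0 \<Longrightarrow> x \<noteq> (i0, j0) \<Longrightarrow> M < fst x * a + snd x * c"
  shows "ps_axis_order_ge (ps_comp b u v) M \<and> ps_comp b u v M 0 = b i0 j0 * u a 0 ^ i0 * v c 0 ^ j0"
proof -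
  have t0: "b (fst x) (snd x) * ps_subst_monomial u v x m 0 = 0" if "m \<le> M" "x \<noteq> (i0, j0) \<or> m < M" for x m
  proof (cases "b (fst x) (snd x) = 0")
    case False
    have "m < fst x * a + snd x * c"
    proof (cases "x = (i0, j0)")
      case True then show ?thesis using that M by auto
    next
      case False' : False
      then show ?thesis using others[OF False False'] that by linarith
    qed
    then show ?thesis using ps_axis_order_ge_subst_monomial[OF u v, of x] by (simp add: ps_axis_order_ge_def)
  qed simp
  have "ps_comp b u v m 0 = 0" if "m < M" for m
    unfolding ps_comp_def by (rule sum.neutral) (use t0 that in auto)
  moreover have "ps_comp b u v M 0 = (\<Sum>x\<in>{(i0, j0)}. b (fst x) (snd x) * ps_subst_monomial u v x M 0)"
    unfolding ps_comp_def
  proof (rule sum.mono_neutral_right[OF finite_deg_le_set])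
    have "i0 + j0 \<le> i0 * a + j0 * c" using a c
      by (metis add_mono mult.right_neutral mult_le_mono2)
    then show "{(i0, j0)} \<subseteq> deg_le_set (M + 0)" using M by (auto simp: deg_le_set_def)
  qed (use t0 in auto)
  ultimately show ?thesis using ps_axis_order_ge_subst_monomial[OF u v, of "(i0, j0)"] M by (simp add: ps_axis_order_ge_def)
qed

section \<open>Uniqueness of expansions\<close>

lemma powser_coeff_eq_0:
  fixes c :: "nat \<Rightarrow> complex"
  assumes r: "0 < r" and sm: "\<And>x. norm x < r \<Longrightarrow> (\<lambda>n. c n * x ^ n) sums 0"
  shows "c k = 0"
proof (cases "k = 0")
  case True
  have "(\<lambda>n. c n * 0 ^ n) sums 0" using sm[of 0] r by simp
  then show ?thesis using True by simp
next
  case False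
  show ?thesis
  proof (rule ccontr)
    assume ck: "c k \<noteq> 0"
    show False
    proof (rule powser_0_nonzero[of r 0 c "\<lambda>_. 0" k])
      fix s :: real assume s: "0 < s" and nz: "\<And>z::complex. z \<in> cball 0 s - {0} \<Longrightarrow> (\<lambda>_. 0::complex) z \<noteq> 0"
      show False using nz[of "complex_of_real s"] s by auto
    qed (use r sm ck False in auto)
  qed
qed

lemma summable_on_row:
  fixes d :: ps2 and z w :: complex
  assumes "(\<lambda>x. d (fst x) (snd x) * z ^ fst x * w ^ snd x) summable_on UNIV" and "z \<noteq> 0"
  shows "(\<lambda>j. d i j * w ^ j) summable_on UNIV"
proof -
  have "(\<lambda>x. d (fst x) (snd x) * z ^ fst x * w ^ snd x) summable_on ((\<lambda>j. (i, j)) ` UNIV)"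
    using summable_on_subset_banach[OF assms(1)] by blast
  then have "(\<lambda>j. z ^ i * (d i j * w ^ j)) summable_on UNIV"
    by (subst (asm) summable_on_reindex) (auto simp: inj_on_def o_def algebra_simps)
  then show ?thesis by (subst (asm) summable_on_cmult_right') (use assms(2) in auto)
qed

lemma ps2_coeff_eq_0:
  fixes d :: ps2
  assumes r: "r > 0"
    and hs: "\<And>z w. norm z < r \<Longrightarrow> norm w < r \<Longrightarrow> ((\<lambda>x. d (fst x) (snd x) * z ^ fst x * w ^ snd x) has_sum 0) UNIV"
  shows "d i j = 0"
proof (rule powser_coeff_eq_0[OF r, of "d i" j])
  fix w :: complex assume w: "norm w < r"
  define z0 where "z0 = complex_of_real (r / 2)"
  have z0: "norm z0 < r" "z0 \<noteq> 0" using r by (auto simp: z0_def)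
  define Dw where "Dw i = infsum (\<lambda>j. d i j * w ^ j) UNIV" for i
  have Dhs: "((\<lambda>j. d i j * w ^ j) has_sum Dw i) UNIV" for i
    unfolding Dw_def by (rule has_sum_infsum, rule summable_on_row[OF has_sum_imp_summable[OF hs[OF z0(1) w]] z0(2)])
  have "Dw k = 0" for k
  proof (rule powser_coeff_eq_0[OF r])
    fix z :: complex assume z: "norm z < r"
    have "((\<lambda>i. Dw i * z ^ i) has_sum 0) UNIV"
    proof (rule has_sum_SigmaD[where B="\<lambda>_. UNIV"])
      show "((\<lambda>x. d (fst x) (snd x) * z ^ fst x * w ^ snd x) has_sum 0) (UNIV \<times> UNIV)"
        using hs[OF z w] by simp
      fix i :: nat
      show "((\<lambda>j. d (fst (i, j)) (snd (i, j)) * z ^ fst (i, j) * w ^ snd (i, j)) has_sum (Dw i * z ^ i)) UNIV"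
        using has_sum_cmult_right[OF Dhs[of i], of "z ^ i"] by (simp add: algebra_simps)
    qed
    then show "(\<lambda>n. Dw n * z ^ n) sums 0" by (rule has_sum_imp_sums)
  qed
  then show "(\<lambda>j. d i j * w ^ j) sums 0" using Dhs[of i] by (metis has_sum_imp_sums)
qed

lemma ps2_expansion_unique:
  assumes A: "ps2_expansion g a" and B: "ps2_expansion g a'"
  shows "a = a'"
proof -
  obtain r1 where r1: "r1 > 0" "\<And>z w. norm z < r1 \<Longrightarrow> norm w < r1 \<Longrightarrow> ((\<lambda>(i,j). a i j * z ^ i * w ^ j) has_sum g z w) UNIV"
    using A unfolding ps2_expansion_def by blast
  obtain r2 where r2: "r2 > 0" "\<And>z w. norm z < r2 \<Longrightarrow> norm w < r2 \<Longrightarrow> ((\<lambda>(i,j). a' i j * z ^ i * w ^ j) has_sum g z w) UNIV"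
    using B unfolding ps2_expansion_def by blast
  define r where "r = min r1 r2"
  have r: "r > 0" using r1 r2 by (simp add: r_def)
  have "a i j - a' i j = 0" for i j
  proof (rule ps2_coeff_eq_0[OF r])
    fix z w :: complex assume "norm z < r" "norm w < r"
    then have "((\<lambda>x. a (fst x) (snd x) * z ^ fst x * w ^ snd x + - (a' (fst x) (snd x) * z ^ fst x * w ^ snd x)) has_sum (g z w + - g z w)) UNIV"
      using r1(2)[of z w] r2(2)[of z w]
      by (intro has_sum_add) (auto simp: r_def case_prod_unfold has_sum_uminus)
    then show "((\<lambda>x. (a (fst x) (snd x) - a' (fst x) (snd x)) * z ^ fst x * w ^ snd x) has_sum 0) UNIV"
      by (simp add: algebra_simps)
  qed
  then show ?thesis by (auto simp: fun_eq_iff)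
qed

lemma coeff2_eqI: "ps2_expansion g c \<Longrightarrow> coeff2 g = c"
  unfolding coeff2_def using ps2_expansion_unique by blast

section \<open>Newton polygons\<close>

definition newton_set :: "ps2 \<Rightarrow> (real \<times> real) set" where
  "newton_set b = \<Union>{ {(x, y). x \<ge> real i \<and> y \<ge> real j} | i j. b i j \<noteq> 0 }"

lemma newton_polygon_eq_hull: "newton_polygon b = convex hull (newton_set b)"
  by (simp add: newton_polygon_def newton_set_def)

lemma mem_newton_set: "p \<in> newton_set b \<longleftrightarrow> (\<exists>i j. b i j \<noteq> 0 \<and> fst p \<ge> real i \<and> snd p \<ge> real j)"
  by (cases p) (auto simp: newton_set_def)

lemma convex_newton_polygon: "convex (newton_polygon b)"
  by (simp add: newton_polygon_eq_hull)

lemma support_in_newton_polygon: "b i j \<noteq> 0 \<Longrightarrow> (real i, real j) \<in> newton_polygon b"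
  unfolding newton_polygon_eq_hull
  by (rule hull_inc) (auto simp: mem_newton_set)

lemma newton_polygon_shift_up:
  assumes "p \<in> newton_polygon b" "0 \<le> h"
  shows "p + (0, h) \<in> newton_polygon b"
proof -
  have "(\<lambda>x. (0, h) + x) ` newton_set b \<subseteq> newton_set b"
    using assms(2) by (force simp: mem_newton_set)
  then have "convex hull ((\<lambda>x. (0, h) + x) ` newton_set b) \<subseteq> convex hull newton_set b" by (rule hull_mono)
  moreover have "(0, h) + p \<in> convex hull ((\<lambda>x. (0, h) + x) ` newton_set b)"
    unfolding convex_hull_translation using assms(1) by (auto simp: newton_polygon_eq_hull)
  ultimately show ?thesis by (auto simp: newton_polygon_eq_hull add.commute)
qed

lemma not_extreme_point_midpoint:
  assumes "a \<in> S" "c \<in> S" "a \<noteq> c" "v = midpoint a c"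
  shows "\<not> v extreme_point_of S"
  using assms midpoint_in_open_segment by (metis extreme_point_of_def)

lemma newton_polygon_extreme_point_support:
  assumes "v extreme_point_of newton_polygon b"
  shows "\<exists>i j. b i j \<noteq> 0 \<and> v = (real i, real j)"
proof -
  have "v \<in> newton_set b"
    using extreme_point_of_convex_hull assms by (simp add: newton_polygon_eq_hull)
  then obtain i j where ij: "b i j \<noteq> 0" "fst v \<ge> real i" "snd v \<ge> real j" by (auto simp: mem_newton_set)
  have sub: "newton_set b \<subseteq> newton_polygon b" by (simp add: newton_polygon_eq_hull hull_subset)
  have "fst v = real i \<and> snd v = real j"
  proof (rule ccontr)
    assume ne: "\<not> (fst v = real i \<and> snd v = real j)"
    obtain e where e: "fst e > 0 \<or> snd e > 0" "0 \<le> fst e" "0 \<le> snd e"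
      "fst e \<le> fst v - real i" "snd e \<le> snd v - real j"
    proof (cases "fst v = real i")
      case True then show ?thesis using ne ij by (intro that[of "(0, snd v - real j)"]) auto
    next
      case False then show ?thesis using ij by (intro that[of "(fst v - real i, 0)"]) auto
    qed
    then have "v - e \<in> newton_set b" "v + e \<in> newton_set b"
      using ij unfolding mem_newton_set by (intro exI[of _ i] exI[of _ j]; simp)+
    then have "v - e \<in> newton_polygon b" "v + e \<in> newton_polygon b" using sub by auto
    moreover have "v - e \<noteq> v + e" "v = midpoint (v - e) (v + e)"
      using e(1) by (auto simp: midpoint_def prod_eq_iff scaleR_prod_def)
    ultimately show False using assms not_extreme_point_midpoint by metis
  qed
  then show ?thesis using ij by (metis prod.collapse)
qed

lemma finite_support_sublevel:
  fixes \<alpha> \<beta> C :: real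
  assumes ab: "\<alpha> > 0" "\<beta> > 0"
  shows "finite {x. b (fst x) (snd x) \<noteq> 0 \<and> \<alpha> * real (fst x) + \<beta> * real (snd x) \<le> C}"
    (is "finite ?S")
proof (rule finite_subset)
  define N where "N = nat \<lceil>C / \<alpha> + C / \<beta>\<rceil>"
  show "?S \<subseteq> {..N} \<times> {..N}"
  proof
    fix x assume "x \<in> ?S"
    then have "\<alpha> * real (fst x) + \<beta> * real (snd x) \<le> C" by simp
    moreover have "0 \<le> \<alpha> * real (fst x)" "0 \<le> \<beta> * real (snd x)" using ab by simp_all
    ultimately have "\<alpha> * real (fst x) \<le> C" "\<beta> * real (snd x) \<le> C" "0 \<le> C" by linarith+
    then have "real (fst x) \<le> C / \<alpha>" "real (snd x) \<le> C / \<beta>" "C / \<alpha> \<ge> 0" "C / \<beta> \<ge> 0"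
      using ab by (auto simp: field_simps)
    then have "real (fst x) \<le> real N" "real (snd x) \<le> real N" unfolding N_def by linarith+
    then show "x \<in> {..N} \<times> {..N}" by (cases x) auto
  qed
qed simp

lemma support_lex_min:
  fixes \<alpha> \<beta> :: real
  assumes ab: "\<alpha> > 0" "\<beta> > 0" and b1: "b i1 j1 \<noteq> 0"
  obtains i0 j0 where "b i0 j0 \<noteq> 0"
    and "\<And>i j. b i j \<noteq> 0 \<Longrightarrow> \<alpha> * real i0 + \<beta> * real j0 \<le> \<alpha> * real i + \<beta> * real j"
    and "\<And>i j. b i j \<noteq> 0 \<Longrightarrow> \<alpha> * real i + \<beta> * real j = \<alpha> * real i0 + \<beta> * real j0 \<Longrightarrow> i0 \<le> i"
proof -
  define L where "L x = \<alpha> * real (fst x) + \<beta> * real (snd x)" for x :: "nat \<times> nat"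
  define C where "C = L (i1, j1)"
  define S where "S = {x. b (fst x) (snd x) \<noteq> 0 \<and> L x \<le> C}"
  have finS: "finite S"
    unfolding S_def L_def by (rule finite_support_sublevel[OF ab])
  have i1S: "(i1, j1) \<in> S" using b1 by (simp add: S_def C_def)
  define M where "M = Min (L ` S)"
  have M_le: "M \<le> L x" if "x \<in> S" for x using finS that by (simp add: M_def)
  have "M \<in> L ` S" unfolding M_def using finS i1S by (intro Min_in) auto
  then obtain x0 where x0: "x0 \<in> S" "L x0 = M" by auto
  define G where "G = {x \<in> S. L x = M}"
  have finG: "finite G" using finS by (simp add: G_def)
  define i0 where "i0 = Min (fst ` G)"
  have "x0 \<in> G" using x0 by (simp add: G_def)
  then have "i0 \<in> fst ` G" unfolding i0_def using finG by (intro Min_in) auto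
  then obtain j0 where j0: "(i0, j0) \<in> G" by force
  have Mall: "M \<le> L x" if "b (fst x) (snd x) \<noteq> 0" for x
    using M_le[of x] M_le[OF i1S] that by (cases "L x \<le> C") (auto simp: S_def C_def)
  have Lj0: "L (i0, j0) = M" using j0 by (simp add: G_def)
  show ?thesis
  proof
    show "b i0 j0 \<noteq> 0" using j0 by (simp add: G_def S_def)
    fix i j assume b: "b i j \<noteq> 0"
    show "\<alpha> * real i0 + \<beta> * real j0 \<le> \<alpha> * real i + \<beta> * real j"
      using Mall[of "(i, j)"] Lj0 b by (simp add: L_def)
  next
    fix i j assume b: "b i j \<noteq> 0" and "\<alpha> * real i + \<beta> * real j = \<alpha> * real i0 + \<beta> * real j0"
    then have "(i, j) \<in> G" using b Lj0 M_le[OF i1S] by (simp add: G_def S_def L_def C_def)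
    then have "i \<in> fst ` G" by force
    then show "i0 \<le> i" using finG by (simp add: i0_def)
  qed
qed

lemma convex_lex_halfplane:
  fixes \<alpha> \<beta> M x0 :: real
  shows "convex {p. \<alpha> * fst p + \<beta> * snd p > M \<or> (\<alpha> * fst p + \<beta> * snd p = M \<and> fst p \<ge> x0)}"
    (is "convex ?H")
  unfolding convex_alt
proof (intro ballI allI impI)
  fix p q :: "real \<times> real" and u :: real
  assume p: "p \<in> ?H" and q: "q \<in> ?H" and u: "0 \<le> u \<and> u \<le> 1"
  define Lp where "Lp = \<alpha> * fst p + \<beta> * snd p"
  define Lq where "Lq = \<alpha> * fst q + \<beta> * snd q"
  have L: "\<alpha> * fst ((1 - u) *\<^sub>R p + u *\<^sub>R q) + \<beta> * snd ((1 - u) *\<^sub>R p + u *\<^sub>R q) = (1 - u) * Lp + u * Lq"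
    by (simp add: Lp_def Lq_def algebra_simps)
  have "(1 - u) * (Lp - M) \<ge> 0" "u * (Lq - M) \<ge> 0"
    using p q u by (auto simp: Lp_def Lq_def)
  moreover have split: "(1 - u) * Lp + u * Lq - M = (1 - u) * (Lp - M) + u * (Lq - M)"
    by (simp add: algebra_simps)
  ultimately consider "(1 - u) * Lp + u * Lq > M" | "(1 - u) * (Lp - M) = 0" "u * (Lq - M) = 0"
    by linarith
  then show "(1 - u) *\<^sub>R p + u *\<^sub>R q \<in> ?H"
  proof cases
    case 1 then show ?thesis using L by simp
  next
    case 2
    then have "u = 1 \<or> x0 \<le> fst p" "u = 0 \<or> x0 \<le> fst q" using p q by (auto simp: Lp_def Lq_def)
    then have "(1 - u) * x0 \<le> (1 - u) * fst p" "u * x0 \<le> u * fst q"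
      using u by (auto intro: mult_left_mono)
    then have "x0 \<le> fst ((1 - u) *\<^sub>R p + u *\<^sub>R q)" by (simp add: algebra_simps)
    moreover have "(1 - u) * Lp + u * Lq = M" using 2 split by linarith
    ultimately show ?thesis using L by simp
  qed
qed

lemma newton_polygon_subset_lex_halfplane:
  fixes \<alpha> \<beta> :: real
  assumes ab: "\<alpha> > 0" "\<beta> > 0"
    and min: "\<And>i j. b i j \<noteq> 0 \<Longrightarrow> \<alpha> * real i0 + \<beta> * real j0 \<le> \<alpha> * real i + \<beta> * real j"
    and tie: "\<And>i j. b i j \<noteq> 0 \<Longrightarrow> \<alpha> * real i + \<beta> * real j = \<alpha> * real i0 + \<beta> * real j0 \<Longrightarrow> i0 \<le> i"
  defines "M \<equiv> \<alpha> * real i0 + \<beta> * real j0"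
  shows "newton_polygon b \<subseteq> {p. \<alpha> * fst p + \<beta> * snd p > M \<or> (\<alpha> * fst p + \<beta> * snd p = M \<and> fst p \<ge> real i0)}"
    (is "_ \<subseteq> ?H")
  unfolding newton_polygon_eq_hull
proof (rule hull_minimal)
  show "newton_set b \<subseteq> ?H"
  proof
    fix p assume "p \<in> newton_set b"
    then obtain i j where ij: "b i j \<noteq> 0" "fst p \<ge> real i" "snd p \<ge> real j" by (auto simp: mem_newton_set)
    have le: "\<alpha> * real i + \<beta> * real j \<le> \<alpha> * fst p + \<beta> * snd p"
      using ij ab by (intro add_mono mult_left_mono) auto
    have Mle: "M \<le> \<alpha> * real i + \<beta> * real j" using min[OF ij(1)] by (simp add: M_def)
    show "p \<in> ?H"
    proof (cases "\<alpha> * fst p + \<beta> * snd p > M")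
      case False
      then have "\<alpha> * fst p + \<beta> * snd p = M" "\<alpha> * real i + \<beta> * real j = M" using le Mle by linarith+
      moreover from this(2) have "i0 \<le> i" using tie[OF ij(1)] by (simp add: M_def)
      ultimately show ?thesis using ij(2) by simp
    qed simp
  qed
qed (rule convex_lex_halfplane)

lemma lex_min_extreme_point:
  fixes \<alpha> \<beta> :: real
  assumes ab: "\<alpha> > 0" "\<beta> > 0" and b0: "b i0 j0 \<noteq> 0"
    and min: "\<And>i j. b i j \<noteq> 0 \<Longrightarrow> \<alpha> * real i0 + \<beta> * real j0 \<le> \<alpha> * real i + \<beta> * real j"
    and tie: "\<And>i j. b i j \<noteq> 0 \<Longrightarrow> \<alpha> * real i + \<beta> * real j = \<alpha> * real i0 + \<beta> * real j0 \<Longrightarrow> i0 \<le> i"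
  shows "(real i0, real j0) extreme_point_of newton_polygon b"
  unfolding extreme_point_of_def
proof (intro conjI ballI notI)
  show "(real i0, real j0) \<in> newton_polygon b" using b0 by (rule support_in_newton_polygon)
  define M where "M = \<alpha> * real i0 + \<beta> * real j0"
  define H where "H = {p :: real \<times> real. \<alpha> * fst p + \<beta> * snd p > M \<or>
                        (\<alpha> * fst p + \<beta> * snd p = M \<and> fst p \<ge> real i0)}"
  have PH: "newton_polygon b \<subseteq> H"
    unfolding H_def M_def by (rule newton_polygon_subset_lex_halfplane[OF ab min tie])
  fix a c assume "a \<in> newton_polygon b" "c \<in> newton_polygon b"
    and "(real i0, real j0) \<in> open_segment a c"
  then obtain u where aH: "a \<in> H" and cH: "c \<in> H" and ac: "a \<noteq> c" and u: "0 < u" "u < 1"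
    and f: "real i0 = (1 - u) * fst a + u * fst c" and s: "real j0 = (1 - u) * snd a + u * snd c"
    using PH by (auto simp: in_segment prod_eq_iff)
  define La where "La = \<alpha> * fst a + \<beta> * snd a"
  define Lc where "Lc = \<alpha> * fst c + \<beta> * snd c"
  have "(1 - u) * (La - M) \<ge> 0" "u * (Lc - M) \<ge> 0"
    using aH cH u by (auto simp: H_def La_def Lc_def)
  moreover have "(1 - u) * (La - M) + u * (Lc - M) = 0"
    unfolding M_def La_def Lc_def f s by (simp add: algebra_simps)
  ultimately have "(1 - u) * (La - M) = 0" "u * (Lc - M) = 0" by linarith+
  then have LL: "La = M" "Lc = M" using u by simp_all
  then have "(1 - u) * (fst a - real i0) \<ge> 0" "u * (fst c - real i0) \<ge> 0"
    using aH cH u by (auto simp: H_def La_def Lc_def)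
  moreover have "(1 - u) * (fst a - real i0) + u * (fst c - real i0) = 0"
    unfolding f by (simp add: algebra_simps)
  ultimately have "(1 - u) * (fst a - real i0) = 0" "u * (fst c - real i0) = 0" by linarith+
  then have fe: "fst a = real i0" "fst c = real i0" using u by simp_all
  then have "\<alpha> * real i0 + \<beta> * snd a = M" "\<alpha> * real i0 + \<beta> * snd c = M"
    using LL by (simp_all add: La_def Lc_def)
  then have "\<beta> * snd a = \<beta> * snd c" by linarith
  then have "snd a = snd c" using ab by simp
  with fe ac show False by (simp add: prod_eq_iff)
qed

lemma newton_polygon_min_vertex:
  fixes \<alpha> \<beta> :: real
  assumes "\<alpha> > 0" "\<beta> > 0" "b i1 j1 \<noteq> 0"
  obtains i0 j0 where "(real i0, real j0) extreme_point_of newton_polygon b"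
    and "\<And>i j. b i j \<noteq> 0 \<Longrightarrow> \<alpha> * real i0 + \<beta> * real j0 \<le> \<alpha> * real i + \<beta> * real j"
proof -
  obtain i0 j0 where b0: "b i0 j0 \<noteq> 0"
    and min: "\<And>i j. b i j \<noteq> 0 \<Longrightarrow> \<alpha> * real i0 + \<beta> * real j0 \<le> \<alpha> * real i + \<beta> * real j"
    and tie: "\<And>i j. b i j \<noteq> 0 \<Longrightarrow> \<alpha> * real i + \<beta> * real j = \<alpha> * real i0 + \<beta> * real j0 \<Longrightarrow> i0 \<le> i"
    using support_lex_min[of \<alpha> \<beta> b, OF assms] by blast
  show thesis by (rule that[OF lex_min_extreme_point[of \<alpha> \<beta> b, OF assms(1,2) b0 min tie] min])
qed

lemma newton_polygon_above_chord_not_extreme: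
  assumes p: "p \<in> newton_polygon b" and q: "q \<in> newton_polygon b" and t: "0 \<le> t" "t \<le> 1"
    and x: "x = (1 - t) * fst p + t * fst q" and y: "y > (1 - t) * snd p + t * snd q"
  shows "\<not> (x, y) extreme_point_of newton_polygon b"
proof -
  define c where "c = (1 - t) *\<^sub>R p + t *\<^sub>R q"
  define h where "h = y - snd c"
  have c: "c \<in> newton_polygon b"
    using convex_alt[THEN iffD1, OF convex_newton_polygon, rule_format, OF p q] t by (simp add: c_def)
  have h: "h > 0" using y by (simp add: h_def c_def)
  have "c + (0, 2 * h) \<in> newton_polygon b" using newton_polygon_shift_up[OF c] h by simp
  moreover have "(x, y) = midpoint c (c + (0, 2 * h))"
    using x by (simp add: midpoint_def c_def h_def prod_eq_iff algebra_simps)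
  moreover have "c \<noteq> c + (0, 2 * h)" using h by (simp add: prod_eq_iff)
  ultimately show ?thesis using c not_extreme_point_midpoint by metis
qed

lemma less_of_step_less:
  fixes f :: "nat \<Rightarrow> nat"
  assumes step: "\<forall>k. 1 \<le> k \<and> k < s \<longrightarrow> f k < f (Suc k)"
  shows "1 \<le> k \<Longrightarrow> k < k' \<Longrightarrow> k' \<le> s \<Longrightarrow> f k < f k'"
proof (induction k')
  case (Suc k')
  show ?case
  proof (cases "k = k'")
    case True then show ?thesis using step Suc.prems by auto
  next
    case False
    then have "f k < f k'" using Suc by auto
    also have "f k' < f (Suc k')" using step Suc.prems False by auto
    finally show ?thesis .
  qed
qed simp

lemma vertex_extreme_point:
  assumes vertices: "{v. v extreme_point_of newton_polygon b}
                     = {(real (nv k), real (mv k)) | k. 1 \<le> k \<and> k \<le> s}"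
    and k: "1 \<le> k" "k \<le> s"
  shows "(real (nv k), real (mv k)) extreme_point_of newton_polygon b"
proof -
  have "(real (nv k), real (mv k)) \<in> {(real (nv k), real (mv k)) | k. 1 \<le> k \<and> k \<le> s}"
    using k by blast
  then show ?thesis using vertices by blast
qed

text \<open>
  If some monomial lay below the line through the last two vertices, a vertex minimising
  x + l1 y would lie strictly below that line, and the second-to-last vertex would lie above its
  chord to the last vertex.
\<close>
lemma support_above_last_edge:
  fixes b :: ps2
  assumes vertices: "{v. v extreme_point_of newton_polygon b}
                     = {(real (nv k), real (mv k)) | k. 1 \<le> k \<and> k \<le> s}"
    and nv_mono: "\<forall>k. 1 \<le> k \<and> k < s \<longrightarrow> nv k < nv (Suc k)"
    and mv_mono: "\<forall>k. 1 \<le> k \<and> k < s \<longrightarrow> mv k > mv (Suc k)"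
    and s1: "s > 1" and d_zero: "mv s = 0"
    and l1: "l1 = (real (nv s) - real (nv (s - 1))) / (real (mv (s - 1)) - real (mv s))"
    and b1: "b i1 j1 \<noteq> 0"
  shows "real (nv s) \<le> real i1 + l1 * real j1"
proof (rule ccontr)
  assume below: "\<not> ?thesis"
  define g where "g = real (nv s)"
  define n' where "n' = real (nv (s - 1))"
  define m' where "m' = real (mv (s - 1))"
  have sS: "Suc (s - 1) = s" using s1 by simp
  have "nv (s - 1) < nv s" "mv (s - 1) > mv s"
    using nv_mono[rule_format, of "s - 1"] mv_mono[rule_format, of "s - 1"] s1 sS by simp_all
  then have gn: "g > n'" and m'pos: "m' > 0" using d_zero by (simp_all add: g_def n'_def m'_def)
  have l1pos: "l1 > 0" and edge: "n' + l1 * m' = g"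
    using gn m'pos d_zero by (simp_all add: l1 g_def n'_def m'_def)
  obtain i0 j0 where ext: "(real i0, real j0) extreme_point_of newton_polygon b"
      and min: "\<And>i j. b i j \<noteq> 0 \<Longrightarrow> 1 * real i0 + l1 * real j0 \<le> 1 * real i + l1 * real j"
    using newton_polygon_min_vertex[of 1 l1 b, OF _ l1pos b1] by auto
  have L0: "real i0 + l1 * real j0 < g" using min[OF b1] below by (simp add: g_def)
  have "(real i0, real j0) \<in> {(real (nv k), real (mv k)) | k. 1 \<le> k \<and> k \<le> s}"
    using ext vertices by blast
  then obtain k where k: "1 \<le> k" "k \<le> s" "i0 = nv k" "j0 = mv k" by auto
  have "k \<noteq> s" using k L0 d_zero by (auto simp: g_def)
  moreover have "k \<noteq> s - 1" using k L0 edge by (auto simp: n'_def m'_def)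
  ultimately have "k < s - 1" using k by auto
  then have i0n': "real i0 < n'" using less_of_step_less[OF nv_mono k(1), of "s - 1"] k by (simp add: n'_def)
  define t where "t = (n' - real i0) / (g - real i0)"
  have t: "0 < t" "t < 1" using i0n' gn by (auto simp: t_def field_simps)
  have "t * (g - real i0) = n' - real i0" using i0n' gn by (simp add: t_def)
  then have x: "n' = (1 - t) * real i0 + t * g" by (simp add: algebra_simps)
  have "(1 - t) * (real i0 + l1 * real j0) < (1 - t) * g" using L0 t by simp
  then have "l1 * ((1 - t) * real j0) < l1 * m'" using x edge by (simp add: algebra_simps)
  then have y: "m' > (1 - t) * real j0 + t * 0" using l1pos by simp
  have "\<not> (n', m') extreme_point_of newton_polygon b"
  proof (rule newton_polygon_above_chord_not_extreme[of "(real i0, real j0)" b "(g, 0)" t])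
    show "(real i0, real j0) \<in> newton_polygon b" using ext by (simp add: extreme_point_of_def)
    show "(g, 0) \<in> newton_polygon b"
      using vertex_extreme_point[OF vertices, of s] s1 d_zero by (simp add: g_def extreme_point_of_def)
  qed (use t x y in auto)
  moreover have "(n', m') extreme_point_of newton_polygon b"
    using vertex_extreme_point[OF vertices, of "s - 1"] s1 by (simp add: n'_def m'_def)
  ultimately show False by contradiction
qed

section \<open>Expansions of the iterates\<close>

definition ps_zero :: ps2 where "ps_zero i j = 0"

definition ps_of_series :: "(nat \<Rightarrow> complex) \<Rightarrow> ps2" where
  "ps_of_series a i j = (if j = 0 then a i else 0)"

lemma ps_zero_props: "ps_abs_conv ps_zero r \<and> ps_eval ps_zero z w = 0 \<and> ps_norm ps_zero r = 0"
  by (simp add: ps_abs_conv_def ps_eval_def ps_norm_def ps_zero_def ps_term_def)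

lemma has_sum_first_axis:
  assumes "(f has_sum S) (UNIV :: nat set)"
  shows "((\<lambda>x::nat\<times>nat. if snd x = 0 then f (fst x) else 0) has_sum S) UNIV"
proof -
  have inj: "inj_on (\<lambda>i::nat. (i, 0::nat)) UNIV" by (auto simp: inj_on_def)
  have "((\<lambda>x::nat\<times>nat. if snd x = 0 then f (fst x) else 0) has_sum S) ((\<lambda>i. (i, 0)) ` UNIV)"
    by (subst has_sum_reindex[OF inj]) (use assms in \<open>simp add: o_def\<close>)
  then show ?thesis
    by (rule has_sum_cong_neutral[THEN iffD1, rotated -1]) auto
qed

lemma ps1_expansion_abs_conv:
  assumes "ps1_expansion p a"
  shows "\<exists>R>0. ps_abs_conv (ps_of_series a) R \<and> (\<forall>x y. norm x \<le> R \<longrightarrow> ps_eval (ps_of_series a) x y = p x)"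
proof -
  obtain r where r: "r > 0" "\<And>z. norm z < r \<Longrightarrow> ((\<lambda>k. a k * z ^ k) has_sum p z) UNIV"
    using assms unfolding ps1_expansion_def by blast
  define R where "R = r / 2"
  have R: "R > 0" "R < r" using r by (auto simp: R_def)
  have "(\<lambda>k. a k * complex_of_real R ^ k) summable_on UNIV"
    using r(2)[of "complex_of_real R"] R has_sum_imp_summable by auto
  then have "(\<lambda>k. norm (a k * complex_of_real R ^ k)) summable_on UNIV"
    by (rule summable_on_iff_abs_summable_on_complex[THEN iffD1])
  then have "((\<lambda>k. norm (a k) * R ^ k) has_sum (infsum (\<lambda>k. norm (a k) * R ^ k) UNIV)) UNIV"
    using R by (simp add: norm_mult norm_power)
  from has_sum_first_axis[OF this] have "ps_abs_conv (ps_of_series a) R"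
    unfolding ps_abs_conv_def ps_of_series_def using has_sum_imp_summable
    by (smt (verit, ccfv_SIG) has_sum_cong mult_eq_0_iff norm_zero add_0_right)
  moreover have "ps_eval (ps_of_series a) x y = p x" if x: "norm x \<le> R" for x y
  proof -
    have "((\<lambda>k. a k * x ^ k) has_sum p x) UNIV" using r(2)[of x] x R by simp
    from has_sum_first_axis[OF this] have "(ps_term (ps_of_series a) x y has_sum p x) UNIV"
      by (rule has_sum_cong[THEN iffD1, rotated]) (auto simp: ps_term_def ps_of_series_def)
    then show ?thesis unfolding ps_eval_def by (rule infsumI)
  qed
  ultimately show ?thesis using R by blast
qed

lemma ps2_expansion_abs_conv:
  assumes "ps2_expansion q b"
  shows "\<exists>R>0. ps_abs_conv b R \<and> (\<forall>x y. norm x \<le> R \<longrightarrow> norm y \<le> R \<longrightarrow> ps_eval b x y = q x y)"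
proof -
  obtain r where r: "r > 0" "\<And>z w. norm z < r \<Longrightarrow> norm w < r \<Longrightarrow> ((\<lambda>(i,j). b i j * z ^ i * w ^ j) has_sum q z w) UNIV"
    using assms unfolding ps2_expansion_def by blast
  define R where "R = r / 2"
  have R: "R > 0" "R < r" using r by (auto simp: R_def)
  have hs: "(ps_term b z w has_sum q z w) UNIV" if "norm z < r" "norm w < r" for z w
    using r(2)[OF that] by (simp add: ps_term_eq case_prod_unfold)
  have "ps_term b (complex_of_real R) (complex_of_real R) summable_on UNIV"
    using hs[of "complex_of_real R" "complex_of_real R"] R has_sum_imp_summable by auto
  then have "(\<lambda>x. norm (ps_term b (complex_of_real R) (complex_of_real R) x)) summable_on UNIV"
    by (rule summable_on_iff_abs_summable_on_complex[THEN iffD1])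
  then have "ps_abs_conv b R" unfolding ps_abs_conv_def ps_term_def
    using R by (simp add: norm_mult norm_power power_add mult.assoc)
  moreover have "ps_eval b x y = q x y" if "norm x \<le> R" "norm y \<le> R" for x y
    unfolding ps_eval_def by (rule infsumI, rule hs) (use that R in auto)
  ultimately show ?thesis using R by blast
qed

primrec skew_coeffs :: "(nat \<Rightarrow> complex) \<Rightarrow> ps2 \<Rightarrow> nat \<Rightarrow> ps2 \<times> ps2" where
  "skew_coeffs a b 0 = (ps_monom 1 0, ps_monom 0 1)"
| "skew_coeffs a b (Suc n) = (ps_comp (ps_of_series a) (fst (skew_coeffs a b n)) ps_zero, ps_comp b (fst (skew_coeffs a b n)) (snd (skew_coeffs a b n)))"

lemma ps_norm_small_radius:
  assumes r: "r > 0" and R: "R > 0" and P: "ps_abs_conv P r" "P 0 0 = 0" and Q: "ps_abs_conv Q r" "Q 0 0 = 0"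
  obtains r' where "0 < r'" "r' \<le> r" "ps_norm P r' \<le> R" "ps_norm Q r' \<le> R"
proof -
  define N where "N = ps_norm P r + ps_norm Q r + 1"
  define r' where "r' = min r (R * r / N)"
  have N: "N > 0" "ps_norm P r \<le> N" "ps_norm Q r \<le> N"
    using ps_norm_nonneg[of r P] ps_norm_nonneg[of r Q] r by (auto simp: N_def)
  have r': "0 < r'" "r' \<le> r" using r R N by (auto simp: r'_def)
  have scale: "r' / r * N \<le> R"
    using r R N by (simp add: r'_def min_def field_simps)
  have bound: "ps_norm c r' \<le> R" if "c 0 0 = 0" "ps_abs_conv c r" "ps_norm c r \<le> N" for c
  proof -
    have "ps_norm c r' \<le> r' / r * ps_norm c r" by (rule ps_norm_shrink[OF that(1,2) r'])
    also have "\<dots> \<le> r' / r * N" using that(3) r r' by (intro mult_left_mono) auto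
    finally show ?thesis using scale by linarith
  qed
  show thesis by (rule that[OF r' bound[OF P(2,1) N(2)] bound[OF Q(2,1) N(3)]])
qed

lemma skew_coeffs_eval:
  assumes R: "R > 0" and ga: "ps_abs_conv (ps_of_series a) R" and gb: "ps_abs_conv b R"
    and ep: "\<forall>x y. norm x \<le> R \<longrightarrow> ps_eval (ps_of_series a) x y = p x"
    and eq: "\<forall>x y. norm x \<le> R \<longrightarrow> norm y \<le> R \<longrightarrow> ps_eval b x y = q x y"
    and a0: "a 0 = 0" and b0: "b 0 0 = 0"
  shows "\<exists>r>0. ps_abs_conv (fst (skew_coeffs a b n)) r \<and> ps_abs_conv (snd (skew_coeffs a b n)) r \<and>
      fst (skew_coeffs a b n) 0 0 = 0 \<and> snd (skew_coeffs a b n) 0 0 = 0 \<and>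
     (\<forall>z w. norm z \<le> r \<longrightarrow> norm w \<le> r \<longrightarrow>
        (((\<lambda>(x, y). (p x, q x y)) ^^ n) (z, w)) = (ps_eval (fst (skew_coeffs a b n)) z w, ps_eval (snd (skew_coeffs a b n)) z w))"
proof (induction n)
  case 0
  have "ps_monom 1 0 0 0 = 0" "ps_monom 0 1 0 0 = 0" by (simp_all add: ps_monom_def)
  then show ?case by (intro exI[of _ 1]) (simp add: ps_abs_conv_monom ps_eval_monom)
next
  case (Suc n)
  obtain P Q where PQn: "skew_coeffs a b n = (P, Q)" by (cases "skew_coeffs a b n")
  obtain r where r: "r > 0" and gP: "ps_abs_conv P r" and gQ: "ps_abs_conv Q r" and P0: "P 0 0 = 0" and Q0: "Q 0 0 = 0"
    and F: "\<And>z w. norm z \<le> r \<Longrightarrow> norm w \<le> r \<Longrightarrow>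
        (((\<lambda>(x, y). (p x, q x y)) ^^ n) (z, w)) = (ps_eval P z w, ps_eval Q z w)"
    using Suc.IH PQn by auto
  obtain r' where r'0: "r' > 0" "r' \<le> r" and NP: "ps_norm P r' \<le> R" and NQ: "ps_norm Q r' \<le> R"
    using ps_norm_small_radius[OF r R gP P0 gQ Q0] by blast
  have gP': "ps_abs_conv P r'" and gQ': "ps_abs_conv Q r'"
    using ps_abs_conv_mono[OF gP] ps_abs_conv_mono[OF gQ] r'0 by auto
  have oP: "ps_order_ge P 1" and oQ: "ps_order_ge Q 1" and oZ: "ps_order_ge ps_zero 1"
    using P0 Q0 by (auto simp: ps_order_ge_def ps_zero_def)
  have NZ: "ps_norm ps_zero r' \<le> R" using ps_zero_props R by simp
  have a00: "ps_of_series a 0 0 = 0" using a0 by (simp add: ps_of_series_def)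
  note gZ = conjunct1[OF ps_zero_props]
  show ?case
  proof (rule exI[of _ r'], intro conjI allI impI)
    show "r' > 0" by (rule r'0)
    show "ps_abs_conv (fst (skew_coeffs a b (Suc n))) r'" using ps_abs_conv_comp[OF ga gP' gZ _ oP oZ NP NZ] r'0 PQn by simp
    show "ps_abs_conv (snd (skew_coeffs a b (Suc n))) r'" using ps_abs_conv_comp[OF gb gP' gQ' _ oP oQ NP NQ] r'0 PQn by simp
    show "fst (skew_coeffs a b (Suc n)) 0 0 = 0" using PQn ps_comp_const_coeff[of "ps_of_series a", OF a00] by simp
    show "snd (skew_coeffs a b (Suc n)) 0 0 = 0" using PQn ps_comp_const_coeff[of b, OF b0] by simp
    fix z w :: complex assume z: "norm z \<le> r'" and w: "norm w \<le> r'"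
    have Fn: "(((\<lambda>(x, y). (p x, q x y)) ^^ n) (z, w)) = (ps_eval P z w, ps_eval Q z w)"
      using F z w r'0 by auto
    have U: "norm (ps_eval P z w) \<le> R" using norm_ps_eval_le[OF gP' z w] NP by linarith
    have V: "norm (ps_eval Q z w) \<le> R" using norm_ps_eval_le[OF gQ' z w] NQ by linarith
    have "p (ps_eval P z w) = ps_eval (ps_of_series a) (ps_eval P z w) (ps_eval ps_zero z w)" using ep U by simp
    also have "\<dots> = ps_eval (ps_comp (ps_of_series a) P ps_zero) z w" using ps_eval_comp[OF ga gP' gZ oP oZ NP NZ z w] by simp
    finally have e1: "p (ps_eval P z w) = ps_eval (ps_comp (ps_of_series a) P ps_zero) z w" .
    have "q (ps_eval P z w) (ps_eval Q z w) = ps_eval b (ps_eval P z w) (ps_eval Q z w)" using eq U V by simp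
    also have "\<dots> = ps_eval (ps_comp b P Q) z w" using ps_eval_comp[OF gb gP' gQ' oP oQ NP NQ z w] by simp
    finally have e2: "q (ps_eval P z w) (ps_eval Q z w) = ps_eval (ps_comp b P Q) z w" .
    show "(((\<lambda>(x, y). (p x, q x y)) ^^ Suc n) (z, w)) = (ps_eval (fst (skew_coeffs a b (Suc n))) z w, ps_eval (snd (skew_coeffs a b (Suc n))) z w)"
      using Fn e1 e2 PQn by simp
  qed
qed
lemma ps2_expansion_skewQ:
  assumes p_exp: "ps1_expansion p a" and q_exp: "ps2_expansion q b" and a0: "a 0 = 0" and b00: "b 0 0 = 0"
  shows "ps2_expansion (skewQ p q n) (snd (skew_coeffs a b n))"
proof -
  obtain R1 where R1: "R1 > 0" "ps_abs_conv (ps_of_series a) R1"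
      "\<forall>x y. norm x \<le> R1 \<longrightarrow> ps_eval (ps_of_series a) x y = p x"
    using ps1_expansion_abs_conv[OF p_exp] by blast
  obtain R2 where R2: "R2 > 0" "ps_abs_conv b R2" "\<forall>x y. norm x \<le> R2 \<longrightarrow> norm y \<le> R2 \<longrightarrow> ps_eval b x y = q x y"
    using ps2_expansion_abs_conv[OF q_exp] by blast
  define R where "R = min R1 R2"
  have R: "R > 0" using R1 R2 by (simp add: R_def)
  have "ps_abs_conv (ps_of_series a) R" "ps_abs_conv b R"
    using ps_abs_conv_mono[OF R1(2), of R] ps_abs_conv_mono[OF R2(2), of R] R by (simp_all add: R_def)
  moreover have "\<forall>x y. norm x \<le> R \<longrightarrow> ps_eval (ps_of_series a) x y = p x"
    "\<forall>x y. norm x \<le> R \<longrightarrow> norm y \<le> R \<longrightarrow> ps_eval b x y = q x y"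
    using R1(3) R2(3) by (simp_all add: R_def)
  ultimately obtain r where r: "r > 0" "ps_abs_conv (snd (skew_coeffs a b n)) r"
    and F: "\<And>z w. norm z \<le> r \<Longrightarrow> norm w \<le> r \<Longrightarrow>
      ((\<lambda>(x, y). (p x, q x y)) ^^ n) (z, w) = (ps_eval (fst (skew_coeffs a b n)) z w, ps_eval (snd (skew_coeffs a b n)) z w)"
    using skew_coeffs_eval[of R a b p q n] R a0 b00 by blast
  show ?thesis unfolding ps2_expansion_def
  proof (intro exI[of _ r] conjI allI impI)
    fix z w :: complex assume z: "norm z < r" and w: "norm w < r"
    have "(ps_term (snd (skew_coeffs a b n)) z w has_sum ps_eval (snd (skew_coeffs a b n)) z w) UNIV"
      by (rule ps_eval_has_sum[OF r(2)]) (use z w in auto)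
    moreover have "skewQ p q n z w = ps_eval (snd (skew_coeffs a b n)) z w"
      using F[of z w] z w by (simp add: skewQ_def)
    ultimately show "((\<lambda>(i, j). snd (skew_coeffs a b n) i j * z ^ i * w ^ j) has_sum skewQ p q n z w) UNIV"
      by (simp add: ps_term_eq case_prod_unfold)
  qed (rule r(1))
qed

section \<open>Orders of the iterates\<close>

definition ps_order :: "ps2 \<Rightarrow> nat" where
  "ps_order c = (LEAST k. \<exists>i j. i + j = k \<and> c i j \<noteq> 0)"

lemma germ_ord_eq_ps_order: "germ_ord g = ps_order (coeff2 g)"
  by (simp add: germ_ord_def ps_order_def)

lemma ps_order_le: "c i j \<noteq> 0 \<Longrightarrow> ps_order c \<le> i + j"
  unfolding ps_order_def by (rule Least_le) blast

lemma ps_order_attained: "c i j \<noteq> 0 \<Longrightarrow> \<exists>i' j'. i' + j' = ps_order c \<and> c i' j' \<noteq> 0"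
  unfolding ps_order_def by (rule LeastI) blast

lemma ps_order_ge_ps_order: "ps_order_ge c (ps_order c)"
  unfolding ps_order_ge_def ps_order_def using not_less_Least by blast

lemma ps_comp_of_series_order:
  assumes d1: "\<delta> \<ge> 1" and ad: "a \<delta> \<noteq> 0" and al: "\<forall>k<\<delta>. a k = 0"
    and u: "ps_order_ge u N" "ps_axis_order_ge u N" "u N 0 \<noteq> 0" and N: "N \<ge> 1"
  shows "ps_order_ge (ps_comp (ps_of_series a) u ps_zero) (\<delta> * N) \<and>
    ps_axis_order_ge (ps_comp (ps_of_series a) u ps_zero) (\<delta> * N) \<and>
    ps_comp (ps_of_series a) u ps_zero (\<delta> * N) 0 \<noteq> 0"
proof -
  have support: "snd x = 0 \<and> fst x \<ge> \<delta>" if "ps_of_series a (fst x) (snd x) \<noteq> 0" for x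
  proof
    show "snd x = 0" using that by (simp add: ps_of_series_def split: if_splits)
    then have "a (fst x) \<noteq> 0" using that by (simp add: ps_of_series_def)
    then show "fst x \<ge> \<delta>" using al by (meson not_le)
  qed
  have "ps_order_ge (ps_comp (ps_of_series a) u ps_zero) (\<delta> * N)"
    unfolding ps_order_ge_def
  proof (intro allI impI)
    fix i j assume ij: "i + j < \<delta> * N"
    show "ps_comp (ps_of_series a) u ps_zero i j = 0"
    proof (rule ccontr)
      assume "ps_comp (ps_of_series a) u ps_zero i j \<noteq> 0"
      from ps_comp_nonzero_imp_support[OF this u(1), of 1] obtain x where
        x: "ps_of_series a (fst x) (snd x) \<noteq> 0" "fst x * N + snd x * 1 \<le> i + j"
        by (auto simp: ps_order_ge_def ps_zero_def)
      have "\<delta> * N \<le> fst x * N" using support[OF x(1)] by simp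
      then show False using x(2) ij by linarith
    qed
  qed
  moreover have "ps_axis_order_ge (ps_comp (ps_of_series a) u ps_zero) (\<delta> * N) \<and>
      ps_comp (ps_of_series a) u ps_zero (\<delta> * N) 0
        = ps_of_series a \<delta> 0 * u N 0 ^ \<delta> * ps_zero (\<delta> * N + 1) 0 ^ 0"
  proof (rule ps_axis_order_ge_comp[OF u(2), of ps_zero "\<delta> * N + 1"])
    show "ps_axis_order_ge ps_zero (\<delta> * N + 1)" by (simp add: ps_axis_order_ge_def ps_zero_def)
    fix x assume x: "ps_of_series a (fst x) (snd x) \<noteq> 0" "x \<noteq> (\<delta>, 0)"
    then have "snd x = 0" "fst x > \<delta>" using support[OF x(1)] by (auto simp: prod_eq_iff)
    then show "\<delta> * N < fst x * N + snd x * (\<delta> * N + 1)" using N by simp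
  qed (use N in simp_all)
  ultimately show ?thesis using u(3) ad by (simp add: ps_of_series_def)
qed

text \<open>
  Here b are the coefficients of q, and \<gamma>, l are the abscissa of the last vertex and the slope l1
  of the last edge of its Newton polygon.
\<close>
locale last_edge_setting =
  fixes a :: "nat \<Rightarrow> complex" and b :: ps2 and \<delta> \<gamma> :: nat and l :: real
  assumes delta_pos: "\<delta> \<ge> 1" and a_delta: "a \<delta> \<noteq> 0" and a_low: "\<forall>k<\<delta>. a k = 0"
    and slope_pos: "l > 0" and delta_below: "l * real \<delta> < real \<gamma>"
    and support_above: "\<And>i j. b i j \<noteq> 0 \<Longrightarrow> real \<gamma> \<le> real i + l * real j"
    and b_axis: "b \<gamma> 0 \<noteq> 0"
begin

abbreviation P :: "nat \<Rightarrow> ps2" where "P n \<equiv> fst (skew_coeffs a b n)"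
abbreviation Q :: "nat \<Rightarrow> ps2" where "Q n \<equiv> snd (skew_coeffs a b n)"

lemma Q_one: "Q 1 = b"
  using ps_comp_monom_X_Y[of b] by simp

lemma gamma_pos: "\<gamma> \<ge> 1"
proof -
  have "0 < l * real \<delta>" using slope_pos delta_pos by simp
  then have "0 < real \<gamma>" using delta_below by linarith
  then show ?thesis by simp
qed

lemma axis_order_ge_b: "ps_axis_order_ge b \<gamma>"
  unfolding ps_axis_order_ge_def
proof (intro allI impI)
  fix i assume "i < \<gamma>"
  then show "b i 0 = 0" using support_above[of i 0] by (cases "b i 0 = 0") auto
qed

lemma weight_gt:
  assumes "b i j \<noteq> 0" "(i, j) \<noteq> (\<gamma>, 0)"
  shows "\<gamma> * \<delta> < \<delta> * i + \<gamma> * j"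
proof (cases "j = 0")
  case True
  then have "\<gamma> < i" using assms support_above[OF assms(1)] by simp
  then show ?thesis using True delta_pos by simp
next
  case False
  have "real \<delta> * real i \<ge> real \<delta> * (real \<gamma> - l * real j)"
    using support_above[OF assms(1)] by (intro mult_left_mono) auto
  moreover have "real j * (real \<gamma> - l * real \<delta>) > 0" using False delta_below by simp
  ultimately have "real \<gamma> * real \<delta> < real \<delta> * real i + real \<gamma> * real j"
    by (simp add: algebra_simps)
  then show ?thesis by (metis of_nat_add of_nat_less_iff of_nat_mult)
qed

lemma weight_ge: "b i j \<noteq> 0 \<Longrightarrow> \<gamma> * \<delta> \<le> \<delta> * i + \<gamma> * j"
  using weight_gt[of i j] by (cases "(i, j) = (\<gamma>, 0)") auto

lemma slope_weight_gt:
  assumes l: "l > 1" and b: "b i j \<noteq> 0"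
  shows "l * real \<delta> * real i + real \<gamma> * real j > real \<gamma> * real \<delta>"
proof -
  define G where "G = real \<gamma>"
  define D where "D = real \<delta>"
  have D: "D \<ge> 1" and G: "G > 0" and lD: "l * D < G" and V: "real i + l * real j \<ge> G"
    using delta_pos gamma_pos delta_below support_above[OF b] by (auto simp: D_def G_def)
  have "l * D * real i + G * real j > G * D"
  proof (cases "l * l * D \<le> G")
    case True
    have "G * real j \<ge> l * l * D * real j" using True by (intro mult_right_mono) auto
    then have "l * D * real i + G * real j \<ge> l * D * (real i + l * real j)"
      by (simp add: algebra_simps)
    moreover have "l * D * (real i + l * real j) \<ge> l * D * G" using V l D by (intro mult_left_mono) auto
    moreover have "l * D * G > G * D" using l D G by simp
    ultimately show ?thesis by linarith
  next
    case False
    then have q: "l * D \<ge> G / l" using l by (simp add: field_simps)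
    have "l * D * real i + G * real j \<ge> (G / l) * (real i + l * real j)"
      using mult_right_mono[OF q, of "real i"] l by (simp add: algebra_simps)
    moreover have "(G / l) * (real i + l * real j) \<ge> (G / l) * G" using V G l by (intro mult_left_mono) auto
    moreover have "G / l > D" using lD l by (simp add: field_simps)
    then have "(G / l) * G > D * G" using G by (rule mult_strict_right_mono)
    ultimately show ?thesis by (simp add: mult.commute)
  qed
  then show ?thesis by (simp add: D_def G_def)
qed

lemma fst_skew_coeffs_order:
  "ps_order_ge (P k) (\<delta> ^ k) \<and> ps_axis_order_ge (P k) (\<delta> ^ k) \<and> P k (\<delta> ^ k) 0 \<noteq> 0"
proof (induction k)
  case 0 then show ?case by (simp add: ps_order_ge_def ps_axis_order_ge_def ps_monom_def)
next
  case (Suc k)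
  then show ?case
    using ps_comp_of_series_order[OF delta_pos a_delta a_low, of "P k" "\<delta> ^ k"] delta_pos
    by (simp add: mult.commute)
qed

lemma snd_skew_coeffs_axis:
  "ps_axis_order_ge (Q (Suc m)) (\<gamma> * \<delta> ^ m) \<and> Q (Suc m) (\<gamma> * \<delta> ^ m) 0 \<noteq> 0"
proof (induction m)
  case 0 then show ?case using Q_one axis_order_ge_b b_axis by simp
next
  case (Suc m)
  have u: "ps_axis_order_ge (P (Suc m)) (\<delta> ^ Suc m)" "P (Suc m) (\<delta> ^ Suc m) 0 \<noteq> 0"
    using fst_skew_coeffs_order[of "Suc m"] by simp_all
  have dm: "\<delta> ^ m \<ge> 1" using delta_pos by simp
  have "ps_axis_order_ge (ps_comp b (P (Suc m)) (Q (Suc m))) (\<gamma> * \<delta> ^ Suc m) \<and>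
      ps_comp b (P (Suc m)) (Q (Suc m)) (\<gamma> * \<delta> ^ Suc m) 0
        = b \<gamma> 0 * P (Suc m) (\<delta> ^ Suc m) 0 ^ \<gamma> * Q (Suc m) (\<gamma> * \<delta> ^ m) 0 ^ 0"
  proof (rule ps_axis_order_ge_comp[OF u(1) conjunct1[OF Suc]])
    show "1 \<le> \<delta> ^ Suc m" using delta_pos by simp
    show "1 \<le> \<gamma> * \<delta> ^ m" using gamma_pos dm by (metis mult_le_mono nat_mult_1)
    show "\<gamma> * \<delta> ^ Suc m = \<gamma> * \<delta> ^ Suc m + 0 * (\<gamma> * \<delta> ^ m)" by simp
    fix x assume "b (fst x) (snd x) \<noteq> 0" "x \<noteq> (\<gamma>, 0)"
    then have "(\<gamma> * \<delta>) * \<delta> ^ m < (\<delta> * fst x + \<gamma> * snd x) * \<delta> ^ m"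
      using weight_gt[of "fst x" "snd x"] dm by (intro mult_less_mono1) (auto simp: Suc_le_eq)
    then show "\<gamma> * \<delta> ^ Suc m < fst x * \<delta> ^ Suc m + snd x * (\<gamma> * \<delta> ^ m)"
      by (simp add: algebra_simps)
  qed
  then show ?case using u(2) b_axis by simp
qed

lemma snd_skew_coeffs_order_le: "ps_order (Q (Suc m)) \<le> \<gamma> * \<delta> ^ m"
  using ps_order_le snd_skew_coeffs_axis[of m] by fastforce

lemma snd_skew_coeffs_nonzero_imp_support:
  assumes "Q (Suc (Suc m)) i' j' \<noteq> 0"
  obtains i j where "b i j \<noteq> 0" "i * \<delta> ^ Suc m + j * ps_order (Q (Suc m)) \<le> i' + j'"
proof -
  have "ps_comp b (P (Suc m)) (Q (Suc m)) i' j' \<noteq> 0" using assms by simp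
  from ps_comp_nonzero_imp_support[OF this conjunct1[OF fst_skew_coeffs_order] ps_order_ge_ps_order]
  show thesis using that by auto
qed

lemma snd_skew_coeffs_order_eq:
  assumes "l \<le> 1"
  shows "ps_order (Q (Suc m)) = \<gamma> * \<delta> ^ m"
proof (induction m)
  case 0
  obtain i j where ij: "i + j = ps_order b" "b i j \<noteq> 0" using ps_order_attained[of b, OF b_axis] by blast
  have "real \<gamma> \<le> real i + l * real j" by (rule support_above[OF ij(2)])
  also have "\<dots> \<le> real i + real j" using assms slope_pos by (simp add: mult_left_le_one_le)
  finally have "\<gamma> \<le> ps_order b" using ij(1) by linarith
  then show ?case using snd_skew_coeffs_order_le[of 0] Q_one by simp
next
  case (Suc m)
  obtain i' j' where ij: "i' + j' = ps_order (Q (Suc (Suc m)))" "Q (Suc (Suc m)) i' j' \<noteq> 0"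
    using ps_order_attained snd_skew_coeffs_axis[of "Suc m"] by blast
  obtain i j where b: "b i j \<noteq> 0" and le: "i * \<delta> ^ Suc m + j * ps_order (Q (Suc m)) \<le> i' + j'"
    using snd_skew_coeffs_nonzero_imp_support[OF ij(2)] by blast
  have "(\<gamma> * \<delta>) * \<delta> ^ m \<le> (\<delta> * i + \<gamma> * j) * \<delta> ^ m" using weight_ge[OF b] by (rule mult_le_mono1)
  then have "\<gamma> * \<delta> ^ Suc m \<le> i' + j'" using le Suc by (simp add: algebra_simps)
  then show ?case using snd_skew_coeffs_order_le[of "Suc m"] ij by simp
qed

lemma ps_order_b_lower:
  assumes "l > 1"
  shows "real \<gamma> / l \<le> real (ps_order b)"
proof -
  obtain i j where ij: "i + j = ps_order b" "b i j \<noteq> 0" using ps_order_attained[of b, OF b_axis] by blast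
  have "real \<gamma> \<le> real i + l * real j" by (rule support_above[OF ij(2)])
  also have "\<dots> \<le> l * (real i + real j)"
    using mult_right_mono[of 1 l "real i"] assms by (simp add: algebra_simps)
  finally have "real \<gamma> \<le> l * real (ps_order b)" by (simp add: ij(1)[symmetric])
  then show ?thesis using assms by (simp add: field_simps)
qed

lemma snd_skew_coeffs_order_gt_step:
  assumes l: "l > 1" and IH: "real (\<gamma> * \<delta> ^ m) / l \<le> real (ps_order (Q (Suc m)))"
  shows "real (\<gamma> * \<delta> ^ Suc m) / l < real (ps_order (Q (Suc (Suc m))))"
proof -
  obtain i' j' where ij: "i' + j' = ps_order (Q (Suc (Suc m)))" "Q (Suc (Suc m)) i' j' \<noteq> 0"
    using ps_order_attained snd_skew_coeffs_axis[of "Suc m"] by blast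
  obtain i j where b: "b i j \<noteq> 0" and le: "i * \<delta> ^ Suc m + j * ps_order (Q (Suc m)) \<le> i' + j'"
    using snd_skew_coeffs_nonzero_imp_support[OF ij(2)] by blast
  define dm where "dm = real \<delta> ^ m"
  have dm: "dm > 0" using delta_pos by (simp add: dm_def)
  have "real (\<gamma> * \<delta> ^ Suc m) / l = (dm / l) * (real \<gamma> * real \<delta>)" by (simp add: dm_def)
  also have "\<dots> < (dm / l) * (l * real \<delta> * real i + real \<gamma> * real j)"
    using slope_weight_gt[OF l b] dm l by (intro mult_strict_left_mono) auto
  also have "\<dots> = real i * (real \<delta> * dm) + real j * (real \<gamma> * dm / l)"
    using l by (simp add: field_simps)
  also have "\<dots> \<le> real i * (real \<delta> * dm) + real j * real (ps_order (Q (Suc m)))"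
    using IH by (intro add_left_mono mult_left_mono) (auto simp: dm_def)
  also have "\<dots> \<le> real (ps_order (Q (Suc (Suc m))))"
    using le ij(1) unfolding dm_def by (metis of_nat_add of_nat_le_iff of_nat_mult of_nat_power power_Suc)
  finally show ?thesis .
qed

lemma snd_skew_coeffs_order_gt:
  assumes "l > 1"
  shows "real (\<gamma> * \<delta> ^ Suc m) / l < real (ps_order (Q (Suc (Suc m))))"
proof -
  have "real (\<gamma> * \<delta> ^ m) / l \<le> real (ps_order (Q (Suc m)))" for m
  proof (induction m)
    case 0 then show ?case using ps_order_b_lower[OF assms] Q_one by simp
  next
    case (Suc m) then show ?case using snd_skew_coeffs_order_gt_step[OF assms, of m] by simp
  qed
  then show ?thesis by (rule snd_skew_coeffs_order_gt_step[OF assms])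
qed

end

lemma last_edge_slope_mult_T_int:
  assumes s: "s > 1" and nlt: "nv (s - 1) < nv s" and mpos: "mv (s - 1) > 0" and d: "mv s = 0"
  shows "(real (nv s) - real (nv (s - 1))) / (real (mv (s - 1)) - real (mv s)) * T_int nv mv (s - 1)
    = real (nv s)"
proof -
  have "T_int nv mv (s - 1) = real (mv (s - 1)) + real (mv (s - 1)) * real (nv (s - 1)) / (real (nv s) - real (nv (s - 1)))"
    unfolding T_int_def using s d by (simp add: Suc_diff_1)
  moreover have "real (nv s) - real (nv (s - 1)) > 0" using nlt by simp
  ultimately show ?thesis using mpos d by (simp add: field_simps)
qed

lemma vertex_in_support:
  assumes vertices: "{v. v extreme_point_of newton_polygon b}
                     = {(real (nv k), real (mv k)) | k. 1 \<le> k \<and> k \<le> s}"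
    and k: "1 \<le> k" "k \<le> s"
  shows "b (nv k) (mv k) \<noteq> 0"
  using newton_polygon_extreme_point_support[OF vertex_extreme_point[OF vertices k]] by auto

lemma last_edge_setting_of_vertices:
  fixes b :: ps2
  assumes delta_pos: "\<delta> \<ge> 1" and a_delta: "a \<delta> \<noteq> 0" and a_low: "\<forall>k<\<delta>. a k = 0"
    and vertices: "{v. v extreme_point_of newton_polygon b}
                     = {(real (nv k), real (mv k)) | k. 1 \<le> k \<and> k \<le> s}"
    and nv_mono: "\<forall>k. 1 \<le> k \<and> k < s \<longrightarrow> nv k < nv (Suc k)"
    and mv_mono: "\<forall>k. 1 \<le> k \<and> k < s \<longrightarrow> mv k > mv (Suc k)"
    and s1: "s > 1" and d_zero: "mv s = 0" and delta_lt: "real \<delta> < T_int nv mv (s - 1)"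
    and l1: "l1 = (real (nv s) - real (nv (s - 1))) / (real (mv (s - 1)) - real (mv s))"
  shows "last_edge_setting a b \<delta> (nv s) l1"
proof
  have "Suc (s - 1) = s" using s1 by simp
  then have nlt: "nv (s - 1) < nv s" and mpos: "mv (s - 1) > 0"
    using nv_mono[rule_format, of "s - 1"] mv_mono[rule_format, of "s - 1"] s1 d_zero by auto
  show l1pos: "l1 > 0" using nlt mpos d_zero by (simp add: l1)
  have "l1 * T_int nv mv (s - 1) = real (nv s)"
    using last_edge_slope_mult_T_int[OF s1 nlt mpos d_zero] by (simp add: l1)
  then show "l1 * real \<delta> < real (nv s)" using delta_lt l1pos by (metis mult_strict_left_mono)
  show "b (nv s) 0 \<noteq> 0" using vertex_in_support[OF vertices, of s] s1 d_zero by simp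
  show "\<And>i j. b i j \<noteq> 0 \<Longrightarrow> real (nv s) \<le> real i + l1 * real j"
    by (rule support_above_last_edge[OF vertices nv_mono mv_mono s1 d_zero l1])
qed (use delta_pos a_delta a_low in auto)

lemma ps_order_lt_last_vertex:
  assumes vertices: "{v. v extreme_point_of newton_polygon b}
                     = {(real (nv k), real (mv k)) | k. 1 \<le> k \<and> k \<le> s}"
    and mv_mono: "\<forall>k. 1 \<le> k \<and> k < s \<longrightarrow> mv k > mv (Suc k)"
    and s1: "s > 1" and d_zero: "mv s = 0"
    and l1: "(real (nv s) - real (nv (s - 1))) / (real (mv (s - 1)) - real (mv s)) > 1"
  shows "ps_order b < nv s"
proof -
  have "mv (s - 1) > 0"
    using mv_mono[rule_format, of "s - 1"] s1 d_zero by (simp add: Suc_diff_1)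
  then have "real (mv (s - 1)) < real (nv s) - real (nv (s - 1))"
    using l1 d_zero by (simp add: field_simps)
  then have "nv (s - 1) + mv (s - 1) < nv s" by linarith
  moreover have "ps_order b \<le> nv (s - 1) + mv (s - 1)"
    using vertex_in_support[OF vertices, of "s - 1"] s1 by (simp add: ps_order_le)
  ultimately show ?thesis by simp
qed

lemma germ_ord_skewQ:
  assumes "ps1_expansion p a" "ps2_expansion q b" "a 0 = 0" "b 0 0 = 0"
  shows "germ_ord (skewQ p q n) = ps_order (snd (skew_coeffs a b n))"
  using coeff2_eqI[OF ps2_expansion_skewQ[OF assms]] by (simp add: germ_ord_eq_ps_order)

theorem theorem4p3:
  fixes p :: "complex \<Rightarrow> complex" and q :: "complex \<Rightarrow> complex \<Rightarrow> complex"
    and a :: "nat \<Rightarrow> complex" and b :: "nat \<Rightarrow> nat \<Rightarrow> complex"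
    and \<delta> s :: nat and nv mv :: "nat \<Rightarrow> nat"
  assumes p_exp: "ps1_expansion p a"
    and delta_pos: "\<delta> \<ge> 1" and a_delta: "a \<delta> \<noteq> 0" and a_low: "\<forall>k<\<delta>. a k = 0"
    and q_exp: "ps2_expansion q b" and b00: "b 0 0 = 0"
    and q_nonzero: "\<exists>i j. b i j \<noteq> 0"
    and vertices: "{v. v extreme_point_of newton_polygon b}
                     = {(real (nv k), real (mv k)) | k. 1 \<le> k \<and> k \<le> s}"
    and nv_mono: "\<forall>k. 1 \<le> k \<and> k < s \<longrightarrow> nv k < nv (Suc k)"
    and mv_mono: "\<forall>k. 1 \<le> k \<and> k < s \<longrightarrow> mv k > mv (Suc k)"
    and case2: "s > 1" "real \<delta> \<le> T_int nv mv (s - 1)"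
    and d_zero: "mv s = 0"
    and delta_lt: "real \<delta> < T_int nv mv (s - 1)"
  shows "(let \<gamma> = nv s;
              l1 = (real (nv s) - real (nv (s - 1))) / (real (mv (s - 1)) - real (mv s));
              \<gamma>n = (\<lambda>n. \<gamma> * \<delta> ^ (n - 1))
          in (l1 \<le> 1 \<longrightarrow> (\<forall>n\<ge>1. germ_ord (skewQ p q n) = \<gamma>n n))
           \<and> (l1 > 1 \<longrightarrow>
                real \<gamma> / l1 \<le> real (germ_ord q) \<and> germ_ord q < \<gamma>
              \<and> (\<forall>n\<ge>2. real (\<gamma>n n) / l1 < real (germ_ord (skewQ p q n))
                        \<and> germ_ord (skewQ p q n) \<le> \<gamma>n n)))"
proof -
  define l1 where "l1 = (real (nv s) - real (nv (s - 1))) / (real (mv (s - 1)) - real (mv s))"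
  interpret last_edge_setting a b \<delta> "nv s" l1
    by (rule last_edge_setting_of_vertices[OF delta_pos a_delta a_low vertices nv_mono mv_mono
          case2(1) d_zero delta_lt l1_def])
  have ord_Q: "germ_ord (skewQ p q n) = ps_order (Q n)" for n
    using germ_ord_skewQ[OF p_exp q_exp _ b00] a_low delta_pos by simp
  have ord_q: "germ_ord q = ps_order b"
    by (simp add: germ_ord_eq_ps_order coeff2_eqI[OF q_exp])
  have "\<forall>n\<ge>1. germ_ord (skewQ p q n) = nv s * \<delta> ^ (n - 1)" if "l1 \<le> 1"
  proof (intro allI impI)
    fix n :: nat assume "n \<ge> 1"
    then obtain m where "n = Suc m" by (metis Suc_le_D One_nat_def)
    then show "germ_ord (skewQ p q n) = nv s * \<delta> ^ (n - 1)"
      using snd_skew_coeffs_order_eq[OF that] by (simp add: ord_Q)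
  qed
  moreover have "\<forall>n\<ge>2. real (nv s * \<delta> ^ (n - 1)) / l1 < real (germ_ord (skewQ p q n))
      \<and> germ_ord (skewQ p q n) \<le> nv s * \<delta> ^ (n - 1)" if "l1 > 1"
  proof (intro allI impI)
    fix n :: nat assume "n \<ge> 2"
    then obtain m where "n = Suc (Suc m)" by (metis add_2_eq_Suc le_Suc_ex)
    then show "real (nv s * \<delta> ^ (n - 1)) / l1 < real (germ_ord (skewQ p q n))
      \<and> germ_ord (skewQ p q n) \<le> nv s * \<delta> ^ (n - 1)"
      using snd_skew_coeffs_order_gt[OF that, of m] snd_skew_coeffs_order_le[of "Suc m"] by (simp add: ord_Q)
  qed
  moreover have "real (nv s) / l1 \<le> real (germ_ord q) \<and> germ_ord q < nv s" if "l1 > 1"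
    using ps_order_b_lower[OF that] ps_order_lt_last_vertex[OF vertices mv_mono case2(1) d_zero] that
    by (simp add: ord_q l1_def)
  ultimately show ?thesis unfolding Let_def l1_def[symmetric] by blast
qed
end
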